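(* Fix $n\in\mathbb{N}$. Let $(B_1(t))_{t\ge0},\dots,(B_n(t))_{t\ge0}$ be mutually independent, where $B_j$ is the time-inhomogeneous pure birth process started at $B_j(0)=0$ which jumps from $k$ to $k+1$ at instantaneous rate $p_j(t,k)$ at time $t$, with $$p_j(t,k)=\frac{1}{\sum_{\ell=0}^{j-1}t^\ell}\Big[(k+1)\sum_{\ell=0}^{j-2}(\ell+1)t^\ell-j\sum_{\ell=j-k-2}^{j-2}(\ell-j+k+2)t^\ell\Big],\quad 0\le k\le j-1.$$ Let $B(t)=(B_1(t),\dots,B_n(t))$ and $\mathcal{M}^B_t=\Phi(B(t))$. Then $(\mathcal{M}^B_t)_{t\ge0}$ is a regular Mallows process and a càdlàg Markov process.
   Context: $\mathcal{E}_n=\{(I_1,\dots,I_n)\in\mathbb{Z}^n:0\le I_j\le j-1\}$; $\mathrm{Inv}_j(\sigma)=|\{i\in[j-1]:\sigma(i)>\sigma(j)\}|$, $\mathrm{Inv}=\sum_j\mathrm{Inv}_j$. $\Phi:\mathcal{E}_n\to\mathcal{S}_n$ is the unique bijection with $\mathrm{Inv}_j(\Phi(I))=I_j$ for all $j$ (for $k=n,\dots,1$: $[n]\setminus\{\sigma(n),\dots,\sigma(k+1)\}=\{x_1<\dots<x_k\}$, $\sigma(k)=x_{k-I_k}$). Mallows distribution $\pi_{n,q}(\sigma)=q^{\mathrm{Inv}(\sigma)}/\prod_{k=1}^n\sum_{\ell=0}^{k-1}q^\ell$ ($0^0=1$). A Mallows process: $\mathcal{S}_n$-valued càdlàg process with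 $\mathcal{M}_t\sim\pi_{n,t}$ for all $t\ge0$. Regular: each $t\mapsto\mathrm{Inv}_j(\mathcal{M}_t)$ nondecreasing, $\mathrm{Inv}(\mathcal{M}_t)\le\mathrm{Inv}(\mathcal{M}_{t-})+1$ for all $t$, and the processes $(\mathrm{Inv}_j(\mathcal{M}_t))_{t\ge0}$, $j\in[n]$, mutually independent. Empty sums are $0$. *)

theory Defs
  imports "HOL-Probability.Probability" "HOL-Combinatorics.Permutations"
begin

definition Sn :: "nat \<Rightarrow> (nat \<Rightarrow> nat) set" where
  "Sn n = {\<sigma>. \<sigma> permutes {1..n}}"

definition invj :: "nat \<Rightarrow> (nat \<Rightarrow> nat) \<Rightarrow> nat" where
  "invj j \<sigma> = card {i. 1 \<le> i \<and> i < j \<and> \<sigma> j < \<sigma> i}"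

definition Inv :: "nat \<Rightarrow> (nat \<Rightarrow> nat) \<Rightarrow> nat" where
  "Inv n \<sigma> = (\<Sum>j\<in>{1..n}. invj j \<sigma>)"

text \<open>Lehmer-code vectors I = (I_1,...,I_n) are functions nat => nat (only indices 1..n matter).\<close>
definition En :: "nat \<Rightarrow> (nat \<Rightarrow> nat) set" where
  "En n = {I. \<forall>j\<in>{1..n}. I j \<le> j - 1}"

definition Phi :: "nat \<Rightarrow> (nat \<Rightarrow> nat) \<Rightarrow> (nat \<Rightarrow> nat)" where
  "Phi n I = (THE \<sigma>. \<sigma> permutes {1..n} \<and> (\<forall>j\<in>{1..n}. invj j \<sigma> = I j))"

text \<open>Mallows distribution; note 0 ^ 0 = 1 in Isabelle.\<close>
definition mallows :: "nat \<Rightarrow> real \<Rightarrow> (nat \<Rightarrow> nat) \<Rightarrow> real" where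
  "mallows n q \<sigma> = q ^ Inv n \<sigma> / (\<Prod>k\<in>{1..n}. \<Sum>l<k. q ^ l)"

text \<open>Cadlag on [0,oo) for paths with values in a discrete space.\<close>
definition cadlag :: "(real \<Rightarrow> 'b) \<Rightarrow> bool" where
  "cadlag f \<longleftrightarrow> (\<forall>t\<ge>0. (\<exists>e>0. \<forall>u\<in>{t..<t+e}. f u = f t) \<and>
                     (t > 0 \<longrightarrow> (\<exists>c. \<exists>e>0. \<forall>u\<in>{t-e<..<t}. f u = c)))"

definition left_lim :: "(real \<Rightarrow> 'b) \<Rightarrow> real \<Rightarrow> 'b" where
  "left_lim f t = (THE c. \<exists>e>0. \<forall>u\<in>{t-e<..<t}. f u = c)"

definition nat_filt :: "'a measure \<Rightarrow> (real \<Rightarrow> 'a \<Rightarrow> 'b) \<Rightarrow> real \<Rightarrow> 'a set set" where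
  "nat_filt M X s = sigma_sets (space M) {X r -` A \<inter> space M | r A. 0 \<le> r \<and> r \<le> s}"

text \<open>Markov property (w.r.t. the natural filtration) for a process with
  discrete (countable) state space: P(X_t = y | F_s) = P(X_t = y | X_s) a.s.,
  written without conditional expectations.\<close>
definition markov_process :: "'a measure \<Rightarrow> (real \<Rightarrow> 'a \<Rightarrow> 'b) \<Rightarrow> bool" where
  "markov_process M X \<longleftrightarrow>
     (\<forall>t. X t \<in> measurable M (count_space UNIV)) \<and>
     (\<forall>s t. 0 \<le> s \<longrightarrow> s \<le> t \<longrightarrow> (\<forall>A\<in>nat_filt M X s. \<forall>x y.
        measure M (A \<inter> {\<omega>\<in>space M. X s \<omega> = x \<and> X t \<omega> = y}) * measure M {\<omega>\<in>space M. X s \<omega> = x}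
        = measure M (A \<inter> {\<omega>\<in>space M. X s \<omega> = x}) * measure M {\<omega>\<in>space M. X s \<omega> = x \<and> X t \<omega> = y}))"

text \<open>Transition probabilities P(X_t = k + d | X_s = k) of the pure birth process with
  jump rates rate(u,m) (from m to m+1 at time u): solution of the Kolmogorov equations,
  P(s,t,k,k) = exp(-int_s^t rate(u,k) du) and
  P(s,t,k,m+1) = int_s^t P(s,u,k,m) rate(u,m) exp(-int_u^t rate(v,m+1) dv) du.\<close>
primrec btrans :: "(real \<Rightarrow> nat \<Rightarrow> real) \<Rightarrow> real \<Rightarrow> real \<Rightarrow> nat \<Rightarrow> nat \<Rightarrow> real" where
  "btrans rate s t k 0 = exp (- (LBINT u=s..t. rate u k))"
| "btrans rate s t k (Suc d) =
     (LBINT u=s..t. btrans rate s u k d * rate u (k + d) * exp (- (LBINT v=u..t. rate v (k + Suc d))))"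

definition birth_trans :: "(real \<Rightarrow> nat \<Rightarrow> real) \<Rightarrow> real \<Rightarrow> real \<Rightarrow> nat \<Rightarrow> nat \<Rightarrow> real" where
  "birth_trans rate s t k m = (if k \<le> m then btrans rate s t k (m - k) else 0)"

definition birth_process :: "'a measure \<Rightarrow> (real \<Rightarrow> 'a \<Rightarrow> nat) \<Rightarrow> (real \<Rightarrow> nat \<Rightarrow> real) \<Rightarrow> bool" where
  "birth_process M X rate \<longleftrightarrow>
     (\<forall>t. X t \<in> measurable M (count_space UNIV)) \<and>
     (AE \<omega> in M. X 0 \<omega> = 0) \<and>
     (AE \<omega> in M. cadlag (\<lambda>t. X t \<omega>)) \<and>
     (\<forall>s t. 0 \<le> s \<longrightarrow> s \<le> t \<longrightarrow> (\<forall>A\<in>nat_filt M X s. \<forall>k m.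
        measure M (A \<inter> {\<omega>\<in>space M. X s \<omega> = k \<and> X t \<omega> = m})
        = measure M (A \<inter> {\<omega>\<in>space M. X s \<omega> = k}) * birth_trans rate s t k m))"

text \<open>The rates p_j(t,k), for 0 <= k <= j-1 (set to 0 otherwise; irrelevant since p_j(t,j-1) = 0).\<close>
definition prate :: "nat \<Rightarrow> real \<Rightarrow> nat \<Rightarrow> real" where
  "prate j t k = (if k \<le> j - 1 then
     (1 / (\<Sum>l<j. t ^ l)) *
       (real (k + 1) * (\<Sum>l<j - 1. real (l + 1) * t ^ l)
        - real j * (\<Sum>l\<in>{int j - int k - 2 .. int j - 2}. of_int (l - int j + int k + 2) * t powi l))
     else 0)"

definition mallows_process :: "'a measure \<Rightarrow> nat \<Rightarrow> (real \<Rightarrow> 'a \<Rightarrow> (nat \<Rightarrow> nat)) \<Rightarrow> bool" where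
  "mallows_process M n X \<longleftrightarrow>
     (\<forall>t. X t \<in> measurable M (count_space UNIV)) \<and>
     (AE \<omega> in M. \<forall>t\<ge>0. X t \<omega> \<in> Sn n) \<and>
     (AE \<omega> in M. cadlag (\<lambda>t. X t \<omega>)) \<and>
     (\<forall>t\<ge>0. \<forall>\<sigma>\<in>Sn n. measure M {\<omega>\<in>space M. X t \<omega> = \<sigma>} = mallows n t \<sigma>)"

definition regular_mallows_process :: "'a measure \<Rightarrow> nat \<Rightarrow> (real \<Rightarrow> 'a \<Rightarrow> (nat \<Rightarrow> nat)) \<Rightarrow> bool" where
  "regular_mallows_process M n X \<longleftrightarrow>
     mallows_process M n X \<and>
     (\<forall>j\<in>{1..n}. AE \<omega> in M. mono_on {0..} (\<lambda>t. invj j (X t \<omega>))) \<and>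
     (AE \<omega> in M. \<forall>t>0. Inv n (X t \<omega>) \<le> Inv n (left_lim (\<lambda>u. X u \<omega>) t) + 1) \<and>
     prob_space.indep_vars M (\<lambda>_. Pi\<^sub>M {0..} (\<lambda>_. count_space UNIV))
        (\<lambda>j \<omega>. restrict (\<lambda>t. invj j (X t \<omega>)) {0..}) {1..n}"

end

theory Submission
  imports Defs
begin

text \<open>Under \<open>\<pi>\<^sub>n\<^sub>,\<^sub>t\<close> the Lehmer coordinates \<open>Inv\<^sub>j\<close> are independent with truncated geometric laws
  \<open>P(Inv\<^sub>j = k) = t\<^sup>k / [j]\<^sub>t\<close>, \<open>[j]\<^sub>t = \<Sum>l<j. t\<^sup>l\<close>. The rates \<open>p\<^sub>j\<close> are chosen so that these laws solve the
  forward Kolmogorov equations of the birth process \<open>B\<^sub>j\<close> started at 0; hence \<open>B\<^sub>j(t)\<close> has exactly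
  this law, and by independence and the bijectivity of the Lehmer code \<open>\<Phi>\<close>, \<open>\<Phi>(B(t))\<close> is
  Mallows distributed. Since \<open>Inv\<^sub>j(\<Phi>(B(t))) = B\<^sub>j(t)\<close>, monotonicity and independence of the
  coordinates are inherited from the \<open>B\<^sub>j\<close>. The total inversion number jumps by at most one
  because, on a grid of mesh \<open>h\<close>, a double jump of one \<open>B\<^sub>j\<close> or simultaneous jumps of two of them
  have probability \<open>O(h\<^sup>2)\<close> per cell. Finally the vector \<open>B\<close> is Markov, as a vector of
  independent Markov processes, and \<open>\<Phi>\<close> is injective on its state space, so \<open>\<Phi>(B)\<close> is Markov.\<close>

section \<open>The Lehmer code\<close>

lemma invj_le: "invj j \<sigma> \<le> j - 1"
proof -
  have "{i. 1 \<le> i \<and> i < j \<and> \<sigma> j < \<sigma> i} \<subseteq> {1..<j}" by auto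
  hence "invj j \<sigma> \<le> card {1..<j::nat}" unfolding invj_def by (intro card_mono) auto
  thus ?thesis by simp
qed

lemma Phi_cong: "(\<And>j. j \<in> {1..n} \<Longrightarrow> I j = I' j) \<Longrightarrow> Phi n I = Phi n I'"
  unfolding Phi_def by (intro arg_cong[where f=The] ext) auto

lemma invj_eq_card_image:
  assumes "inj_on \<sigma> {1..j}" "j \<ge> 1"
  shows "invj j \<sigma> = card {x \<in> \<sigma> ` {1..j}. \<sigma> j < x}"
proof -
  have "{x \<in> \<sigma> ` {1..j}. \<sigma> j < x} = \<sigma> ` {i. 1 \<le> i \<and> i < j \<and> \<sigma> j < \<sigma> i}"
  proof (intro equalityI subsetI)
    fix x assume "x \<in> {x \<in> \<sigma> ` {1..j}. \<sigma> j < x}"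
    then obtain i where i: "i \<in> {1..j}" "x = \<sigma> i" "\<sigma> j < \<sigma> i" by auto
    hence "i < j" using le_neq_implies_less by fastforce
    thus "x \<in> \<sigma> ` {i. 1 \<le> i \<and> i < j \<and> \<sigma> j < \<sigma> i}" using i by auto
  qed auto
  moreover have "inj_on \<sigma> {i. 1 \<le> i \<and> i < j \<and> \<sigma> j < \<sigma> i}"
    using assms(1) by (rule inj_on_subset) auto
  ultimately show ?thesis unfolding invj_def by (simp add: card_image)
qed

lemma permutes_image_atLeastAtMost:
  fixes n j :: nat
  assumes "\<sigma> permutes {1..n}" "j \<le> n"
  shows "\<sigma> ` {1..j} = {1..n} - \<sigma> ` {j+1..n}"
proof -
  have "{1..n} - \<sigma> ` {j+1..n} = \<sigma> ` {1..n} - \<sigma> ` {j+1..n}"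
    using assms(1) by (simp add: permutes_image)
  also have "\<dots> = \<sigma> ` ({1..n} - {j+1..n})"
    using permutes_inj_on[OF assms(1)] by (intro inj_on_image_set_diff[symmetric]) auto
  also have "{1..n} - {j+1..n} = {1..j}" using assms(2) by auto
  finally show ?thesis by simp
qed

text \<open>Injectivity of the Lehmer code: at the largest position \<open>j\<close> where \<open>\<sigma>\<close> and \<open>\<tau>\<close> differ,
  both map \<open>{1..j}\<close> onto the same set \<open>R\<close>, and \<open>invj j\<close> is the rank of the image of \<open>j\<close> in \<open>R\<close>
  counted from the top.\<close>
lemma permutes_eq_if_invj_eq:
  fixes n :: nat
  assumes s: "\<sigma> permutes {1..n}" and t: "\<tau> permutes {1..n}"
    and eq: "\<forall>j\<in>{1..n}. invj j \<sigma> = invj j \<tau>"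
  shows "\<sigma> = \<tau>"
proof (rule ccontr)
  assume ne: "\<sigma> \<noteq> \<tau>"
  define D where "D = {j\<in>{1..n}. \<sigma> j \<noteq> \<tau> j}"
  have "D \<noteq> {}"
  proof
    assume "D = {}"
    hence "\<sigma> x = \<tau> x" for x
      using permutes_not_in[OF s, of x] permutes_not_in[OF t, of x] unfolding D_def by (cases "x \<in> {1..n}") auto
    thus False using ne by auto
  qed
  moreover have fD: "finite D" unfolding D_def by auto
  ultimately have jD: "Max D \<in> D" by simp
  define j where "j = Max D"
  have j: "1 \<le> j" "j \<le> n" "\<sigma> j \<noteq> \<tau> j" using jD unfolding D_def j_def by auto
  have "\<sigma> i = \<tau> i" if i: "i \<in> {j+1..n}" for i
  proof (rule ccontr)
    assume "\<sigma> i \<noteq> \<tau> i"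
    hence "i \<le> j" using i Max_ge[OF fD, of i] unfolding D_def j_def by auto
    thus False using i by auto
  qed
  hence "\<sigma> ` {j+1..n} = \<tau> ` {j+1..n}" by (auto simp: image_iff)
  hence R: "\<sigma> ` {1..j} = \<tau> ` {1..j}"
    using permutes_image_atLeastAtMost[OF s j(2)] permutes_image_atLeastAtMost[OF t j(2)] by simp
  define R where "R = \<sigma> ` {1..j}"
  have inj: "inj_on \<sigma> {1..j}" "inj_on \<tau> {1..j}"
    using permutes_inj_on[OF s] permutes_inj_on[OF t] j(2) by (auto intro: inj_on_subset)
  have i\<sigma>: "invj j \<sigma> = card {x \<in> R. \<sigma> j < x}"
    unfolding R_def by (rule invj_eq_card_image[OF inj(1) j(1)])
  have i\<tau>: "invj j \<tau> = card {x \<in> R. \<tau> j < x}"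
    unfolding R_def R by (rule invj_eq_card_image[OF inj(2) j(1)])
  have "\<sigma> j \<in> \<sigma> ` {1..j}" "\<tau> j \<in> \<tau> ` {1..j}" using j(1) by auto
  hence mem: "\<sigma> j \<in> R" "\<tau> j \<in> R" unfolding R_def R by simp_all

  have lt: "card {x \<in> R. b < x} < card {x \<in> R. a < x}" if "a \<in> R" "b \<in> R" "a < b" for a b
    by (rule psubset_card_mono) (use that in \<open>auto simp: R_def\<close>)
  have "invj j \<sigma> = invj j \<tau>" using eq j by auto
  thus False using lt[OF mem] lt[OF mem(2,1)] j(3) i\<sigma> i\<tau> by (cases "\<sigma> j < \<tau> j") auto
qed

definition lehmer_code :: "nat \<Rightarrow> (nat \<Rightarrow> nat) \<Rightarrow> (nat \<Rightarrow> nat)" where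
  "lehmer_code n \<sigma> = restrict (\<lambda>j. invj j \<sigma>) {1..n}"

lemma bij_betw_lehmer_code: "bij_betw (lehmer_code n) (Sn n) (PiE {1..n} (\<lambda>j. {..<j}))"
proof -
  have inj: "inj_on (lehmer_code n) (Sn n)"
  proof
    fix \<sigma> \<tau> assume "\<sigma> \<in> Sn n" "\<tau> \<in> Sn n" and eq: "lehmer_code n \<sigma> = lehmer_code n \<tau>"
    have "\<forall>j\<in>{1..n}. invj j \<sigma> = invj j \<tau>"
      using fun_cong[OF eq] by (metis lehmer_code_def restrict_apply')
    thus "\<sigma> = \<tau>" using \<open>\<sigma> \<in> Sn n\<close> \<open>\<tau> \<in> Sn n\<close> permutes_eq_if_invj_eq unfolding Sn_def by blast
  qed
  have sub: "lehmer_code n ` Sn n \<subseteq> PiE {1..n} (\<lambda>j. {..<j})"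
  proof
    fix I assume "I \<in> lehmer_code n ` Sn n"
    then obtain \<sigma> where "I = lehmer_code n \<sigma>" by blast
    moreover have "invj j \<sigma> < j" if "j \<in> {1..n}" for j
      using invj_le[of j \<sigma>] that by auto
    ultimately show "I \<in> PiE {1..n} (\<lambda>j. {..<j})" by (simp add: lehmer_code_def)
  qed
  have "card (Sn n) = fact n" unfolding Sn_def using card_permutations[of "{1..n}" n] by auto
  moreover have "card (PiE {1..n} (\<lambda>j. {..<j::nat})) = fact n"
    by (simp add: card_PiE fact_prod)
  ultimately have "card (lehmer_code n ` Sn n) = card (PiE {1..n} (\<lambda>j. {..<j}))"
    using inj by (simp add: card_image)
  hence "lehmer_code n ` Sn n = PiE {1..n} (\<lambda>j. {..<j})"
    by (intro card_subset_eq sub) (auto intro!: finite_PiE)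
  thus ?thesis using inj unfolding bij_betw_def by simp
qed

lemma Phi_eqI:
  assumes "\<sigma> \<in> Sn n" "\<forall>j\<in>{1..n}. invj j \<sigma> = I j"
  shows "Phi n I = \<sigma>"
  unfolding Phi_def
proof (rule the_equality)
  show "\<sigma> permutes {1..n} \<and> (\<forall>j\<in>{1..n}. invj j \<sigma> = I j)" using assms unfolding Sn_def by simp
  fix \<tau> assume "\<tau> permutes {1..n} \<and> (\<forall>j\<in>{1..n}. invj j \<tau> = I j)"
  thus "\<tau> = \<sigma>" using assms permutes_eq_if_invj_eq[of \<tau> n \<sigma>] unfolding Sn_def by auto
qed

lemma
  assumes "\<forall>j\<in>{1..n}. I j \<le> j - 1"
  shows Phi_in_Sn: "Phi n I \<in> Sn n" and invj_Phi: "\<forall>j\<in>{1..n}. invj j (Phi n I) = I j"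
proof -
  have "restrict I {1..n} \<in> PiE {1..n} (\<lambda>j. {..<j})"
    using assms by (fastforce simp: restrict_PiE_iff)
  then obtain \<sigma> where \<sigma>: "\<sigma> \<in> Sn n" "lehmer_code n \<sigma> = restrict I {1..n}"
    using bij_betw_lehmer_code[of n] unfolding bij_betw_def by (metis imageE)
  have "\<forall>j\<in>{1..n}. invj j \<sigma> = I j" using fun_cong[OF \<sigma>(2)] by (metis lehmer_code_def restrict_apply')
  with \<sigma>(1) have "Phi n I = \<sigma>" by (rule Phi_eqI)
  thus "Phi n I \<in> Sn n" "\<forall>j\<in>{1..n}. invj j (Phi n I) = I j"
    using \<sigma>(1) \<open>\<forall>j\<in>{1..n}. invj j \<sigma> = I j\<close> by auto
qed
section \<open>Marginals of the birth processes\<close>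

text \<open>\<open>qint j t\<close> is the \<open>t\<close>-integer \<open>[j]\<^sub>t = \<Sum>l<j. t\<^sup>l\<close>, the normalising constant of the law
  \<open>P(Inv\<^sub>j = k) = t\<^sup>k / [j]\<^sub>t\<close> of the \<open>j\<close>-th Lehmer coordinate under \<open>\<pi>\<^sub>n\<^sub>,\<^sub>t\<close>; \<open>prate j t k\<close> is
  \<open>rate_num j k t / [j]\<^sub>t\<close>, where \<open>rate_tail\<close> is the second sum of the rate reindexed by
  \<open>\<ell> = j + i - k - 2\<close> (its \<open>i = 0\<close> term vanishes, so the truncated exponent there is harmless).\<close>
definition qint :: "nat \<Rightarrow> real \<Rightarrow> real" where
  "qint j t = (\<Sum>l<j. t ^ l)"

definition qint_deriv :: "nat \<Rightarrow> real \<Rightarrow> real" where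
  "qint_deriv j t = (\<Sum>l<j - 1. real (l + 1) * t ^ l)"

definition rate_tail :: "nat \<Rightarrow> nat \<Rightarrow> real \<Rightarrow> real" where
  "rate_tail j k t = (\<Sum>i\<le>k. real i * t ^ (j + i - (k + 2)))"

definition rate_num :: "nat \<Rightarrow> nat \<Rightarrow> real \<Rightarrow> real" where
  "rate_num j k t = real (k + 1) * qint_deriv j t - real j * rate_tail j k t"

lemma qint_Suc: "qint (Suc j) t = qint j t + t ^ j"
  by (simp add: qint_def)

lemma qint_deriv_Suc: "qint_deriv (Suc j) t = qint_deriv j t + real j * t ^ (j - 1)"
  by (cases j) (simp_all add: qint_deriv_def)

lemma qint_ge_1: "t \<ge> 0 \<Longrightarrow> j \<ge> 1 \<Longrightarrow> qint j t \<ge> 1"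
proof (induction j)
  case (Suc j)
  thus ?case by (cases "j = 0") (auto simp: qint_Suc qint_def intro: add_increasing2)
qed simp

lemma qint_0: "j \<ge> 1 \<Longrightarrow> qint j 0 = 1"
proof (induction j)
  case (Suc j)
  thus ?case by (cases "j = 0") (simp_all add: qint_Suc qint_def)
qed simp

lemma continuous_on_qint: "continuous_on S (qint j)"
  unfolding qint_def[abs_def] by (intro continuous_intros)

lemma has_real_derivative_qint: "(qint j has_real_derivative qint_deriv j t) (at t)"
proof (induction j)
  case 0 show ?case by (simp add: qint_def qint_deriv_def)
next
  case (Suc j)
  have "((\<lambda>t. t ^ j) has_real_derivative real j * t ^ (j - 1)) (at t)"
    using DERIV_pow[of j t] by simp
  from DERIV_add[OF Suc this] show ?case
    by (simp add: qint_Suc[abs_def] qint_deriv_Suc)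
qed

lemma qint_deriv_identity: "j \<ge> 1 \<Longrightarrow> (t - 1) * qint_deriv j t + qint j t = real j * t ^ (j - 1)"
proof (induction j)
  case (Suc j)
  show ?case
  proof (cases "j = 0")
    case False
    hence "t ^ j = t * t ^ (j - 1)" by (cases j) auto
    thus ?thesis unfolding qint_deriv_Suc qint_Suc using Suc False by (simp add: algebra_simps)
  qed (simp add: qint_deriv_def qint_def)
qed simp

lemma rate_tail_Suc:
  assumes "k + 2 \<le> j"
  shows "t * rate_tail j (Suc k) t - rate_tail j k t = real (k + 1) * t ^ (j - 1)"
proof -
  have "t * rate_tail j (Suc k) t = (\<Sum>i\<le>Suc k. real i * t ^ (j + i - (k + 2)))"
    unfolding rate_tail_def sum_distrib_left
  proof (rule sum.cong[OF refl])
    fix i assume "i \<in> {..Suc k}"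
    show "t * (real i * t ^ (j + i - (Suc k + 2))) = real i * t ^ (j + i - (k + 2))"
    proof (cases "i = 0")
      case False
      hence "j + i - (k + 2) = Suc (j + i - (Suc k + 2))" using assms by simp
      thus ?thesis by simp
    qed simp
  qed
  also have "\<dots> = rate_tail j k t + real (Suc k) * t ^ (j - 1)"
    unfolding rate_tail_def by simp
  finally show ?thesis by simp
qed

lemma rate_num_Suc:
  assumes "k + 2 \<le> j"
  shows "t ^ Suc k * rate_num j (Suc k) t - t ^ k * rate_num j k t
       = t ^ Suc k * qint_deriv j t - real (k + 1) * t ^ k * qint j t"
proof -
  have q: "qint j t = real j * t ^ (j - 1) - (t - 1) * qint_deriv j t"
    using qint_deriv_identity[of j t] assms by simp
  have r: "rate_tail j k t = t * rate_tail j (Suc k) t - real (k + 1) * t ^ (j - 1)"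
    using rate_tail_Suc[OF assms, of t] by simp
  show ?thesis unfolding rate_num_def q r by (simp add: algebra_simps)
qed

lemma prate_eq_rate_num:
  assumes "1 \<le> j" "k \<le> j - 1"
  shows "prate j t k = rate_num j k t / qint j t"
proof -
  have "(\<Sum>l\<in>{int j - int k - 2 .. int j - 2}. of_int (l - int j + int k + 2) * t powi l)
      = (\<Sum>i\<le>k. of_int (int i) * t powi (int j - int k - 2 + int i))"
    by (rule sum.reindex_bij_witness[of _ "\<lambda>i. int j - int k - 2 + int i" "\<lambda>l. nat (l - (int j - int k - 2))"])
       auto
  also have "\<dots> = rate_tail j k t" unfolding rate_tail_def
  proof (rule sum.cong[OF refl])
    fix i assume "i \<in> {..k}"
    show "of_int (int i) * t powi (int j - int k - 2 + int i) = real i * t ^ (j + i - (k + 2))"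
    proof (cases "i = 0")
      case False
      hence "int j - int k - 2 + int i = int (j + i - (k + 2))" using assms by simp
      hence "t powi (int j - int k - 2 + int i) = t ^ (j + i - (k + 2))"
        by (simp only: power_int_of_nat)
      thus ?thesis by simp
    qed simp
  qed
  finally show ?thesis unfolding prate_def using assms by (simp add: rate_num_def qint_def qint_deriv_def)
qed

lemma continuous_on_prate:
  assumes "1 \<le> j"
  shows "continuous_on {0..T} (\<lambda>u. prate j u k)"
proof (cases "k \<le> j - 1")
  case True
  have "continuous_on {0..T} (\<lambda>u. rate_num j k u / qint j u)"
    unfolding rate_num_def qint_deriv_def rate_tail_def
    by (intro continuous_intros continuous_on_qint) (use qint_ge_1 assms in fastforce)
  thus ?thesis using prate_eq_rate_num[OF assms True] by simp
qed (simp add: prate_def)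

text \<open>The forward Kolmogorov equation \<open>\<pi>\<^sub>k\<^sub>+\<^sub>1' = p\<^sub>j(\<cdot>,k) \<pi>\<^sub>k - p\<^sub>j(\<cdot>,k+1) \<pi>\<^sub>k\<^sub>+\<^sub>1\<close> for
  \<open>\<pi>\<^sub>k(t) = t\<^sup>k / [j]\<^sub>t\<close>; this is what the rates are designed for.\<close>
lemma has_real_derivative_Kolmogorov:
  assumes "k + 2 \<le> j" "t \<ge> 0"
  shows "((\<lambda>u. u ^ Suc k / qint j u) has_real_derivative
           prate j t k * (t ^ k / qint j t) - prate j t (Suc k) * (t ^ Suc k / qint j t)) (at t)"
proof -
  have Z: "qint j t \<ge> 1" using qint_ge_1[of t j] assms by auto
  have "((\<lambda>u. u ^ Suc k / qint j u) has_real_derivative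
     ((real (Suc k) * t ^ k) * qint j t - t ^ Suc k * qint_deriv j t) / (qint j t * qint j t)) (at t)"
    using DERIV_pow[of "Suc k" t] Z by (intro DERIV_divide has_real_derivative_qint) auto
  moreover have "((real (Suc k) * t ^ k) * qint j t - t ^ Suc k * qint_deriv j t) / (qint j t * qint j t)
      = prate j t k * (t ^ k / qint j t) - prate j t (Suc k) * (t ^ Suc k / qint j t)"
  proof -
    have p: "prate j t k = rate_num j k t / qint j t" "prate j t (Suc k) = rate_num j (Suc k) t / qint j t"
      using assms by (simp_all add: prate_eq_rate_num)
    show ?thesis unfolding p using Z rate_num_Suc[OF assms(1), of t] by (simp add: field_simps)
  qed
  ultimately show ?thesis by simp
qed

lemma interval_integral_variation_of_constants:
  fixes p g \<pi> :: "real \<Rightarrow> real"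
  assumes st: "s \<le> t" and p: "continuous_on {s..t} p" and g: "continuous_on {s..t} g"
    and \<pi>: "\<And>x. x \<in> {s..t} \<Longrightarrow> (\<pi> has_real_derivative g x - p x * \<pi> x) (at x)" and "\<pi> s = 0"
  shows "(LBINT u=s..t. g u * exp (- (LBINT v=u..t. p v))) = \<pi> t"
proof -
  define G where "G u = (LBINT v=s..u. p v)" for u
  have G: "(G has_vector_derivative p x) (at x within {s..t})" if "x \<in> {s..t}" for x
    unfolding G_def[abs_def] using that p by (intro interval_integral_FTC2) auto
  hence Gcont: "continuous_on {s..t} G"
    using has_vector_derivative_continuous continuous_on_eq_continuous_within by blast
  have inner: "(LBINT v=u..t. p v) = G t - G u" if "u \<in> {s..t}" for u
    using that continuous_on_subset[OF p] has_vector_derivative_within_subset[OF G]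
    by (intro interval_integral_FTC_finite) auto
  define H where "H u = \<pi> u * exp (G u - G t)" for u
  have "(LBINT u=s..t. g u * exp (- (LBINT v=u..t. p v))) = (LBINT u=s..t. g u * exp (G u - G t))"
    using st by (intro interval_integral_cong) (auto simp: inner einterval_iff)
  also have "\<dots> = H t - H s"
  proof (rule interval_integral_FTC_finite)
    show "continuous_on {min s t..max s t} (\<lambda>u. g u * exp (G u - G t))"
      using st by (auto intro!: continuous_intros g Gcont)
    fix x assume "min s t \<le> x" "x \<le> max s t"
    hence x: "x \<in> {s..t}" using st by auto
    have "((\<lambda>u. G u - G t) has_real_derivative p x) (at x within {s..t})"
      using G[OF x] by (auto simp: has_real_derivative_iff_has_vector_derivative intro!: derivative_eq_intros)
    hence "((\<lambda>u. exp (G u - G t)) has_real_derivative exp (G x - G t) * p x) (at x within {s..t})"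
      by (rule DERIV_chain2[OF DERIV_exp])
    from DERIV_mult[OF has_field_derivative_at_within[OF \<pi>[OF x]] this]
    have "(H has_real_derivative g x * exp (G x - G t)) (at x within {s..t})"
      unfolding H_def[abs_def] by (rule DERIV_cong) (simp add: algebra_simps)
    thus "(H has_vector_derivative g x * exp (G x - G t)) (at x within {min s t..max s t})"
      using st by (simp add: has_real_derivative_iff_has_vector_derivative)
  qed
  also have "H t - H s = \<pi> t" using \<open>\<pi> s = 0\<close> by (simp add: H_def)
  finally show ?thesis .
qed

lemma interval_integral_prate_0:
  assumes j: "1 \<le> j" and t: "t \<ge> 0"
  shows "(LBINT u=ereal 0..t. prate j u 0) = ln (qint j t)"
proof -
  have "(LBINT u=ereal 0..t. prate j u 0) = ln (qint j t) - ln (qint j 0)"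
  proof (rule interval_integral_FTC_finite)
    show "continuous_on {min 0 t..max 0 t} (\<lambda>u. prate j u 0)"
      using continuous_on_prate[OF j, of t 0] t by simp
    fix x assume "min 0 t \<le> x" "x \<le> max 0 t"
    hence Z: "qint j x \<ge> 1" using qint_ge_1[of x j] j t by auto
    have "((\<lambda>u. ln (qint j u)) has_real_derivative (1 / qint j x) * qint_deriv j x) (at x)"
      using Z by (intro DERIV_chain2[OF DERIV_ln_divide has_real_derivative_qint]) auto
    moreover have "(1 / qint j x) * qint_deriv j x = prate j x 0"
      using prate_eq_rate_num[OF j, of 0 x] by (simp add: rate_num_def rate_tail_def)
    ultimately show "((\<lambda>u. ln (qint j u)) has_vector_derivative prate j x 0) (at x within {min 0 t..max 0 t})"
      by (simp add: has_real_derivative_iff_has_vector_derivative[symmetric] has_field_derivative_at_within)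
  qed
  thus ?thesis using qint_0[OF j] by simp
qed

theorem btrans_prate_from_0:
  assumes j: "1 \<le> j"
  shows "k \<le> j - 1 \<Longrightarrow> t \<ge> 0 \<Longrightarrow> btrans (prate j) 0 t 0 k = t ^ k / qint j t"
proof (induction k arbitrary: t)
  case 0
  thus ?case using interval_integral_prate_0[OF j] qint_ge_1[of t j] j
    by (simp add: exp_minus divide_inverse)
next
  case (Suc k)
  have kj: "k + 2 \<le> j" using Suc.prems j by simp
  have "btrans (prate j) 0 t 0 (Suc k)
      = (LBINT u=ereal 0..t. btrans (prate j) 0 u 0 k * prate j u k * exp (- (LBINT v=u..t. prate j v (Suc k))))"
    by simp
  also have "\<dots> = (LBINT u=ereal 0..t. prate j u k * (u ^ k / qint j u) * exp (- (LBINT v=u..t. prate j v (Suc k))))"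
    using Suc by (intro interval_integral_cong) (auto simp: einterval_iff min_def max_def split: if_splits)
  also have "\<dots> = t ^ Suc k / qint j t"
  proof (rule interval_integral_variation_of_constants)
    show "continuous_on {0..t} (\<lambda>u. prate j u k * (u ^ k / qint j u))"
      by (intro continuous_intros continuous_on_prate continuous_on_qint j)
         (use qint_ge_1 j in fastforce)
    show "((\<lambda>u. u ^ Suc k / qint j u) has_real_derivative
            prate j x k * (x ^ k / qint j x) - prate j x (Suc k) * (x ^ Suc k / qint j x)) (at x)"
      if "x \<in> {0..t}" for x
      using has_real_derivative_Kolmogorov[OF kj] that by simp
  qed (use Suc.prems continuous_on_prate j in auto)
  finally show ?case .
qed
section \<open>Short-time bounds for transition probabilities\<close>

lemma abs_interval_integral_le:
  fixes g :: "real \<Rightarrow> real"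
  assumes ab: "a \<le> b" and R: "R \<ge> 0" and g: "\<And>x. x \<in> {a..b} \<Longrightarrow> \<bar>g x\<bar> \<le> R"
  shows "\<bar>LBINT x=a..b. g x\<bar> \<le> R * (b - a)"
proof -
  have "(LBINT x=a..b. g x) = (\<integral>x. indicator {a..b} x * g x \<partial>lborel)"
    using ab by (simp add: interval_integral_Icc set_lebesgue_integral_def)
  hence "\<bar>LBINT x=a..b. g x\<bar> \<le> (\<integral>x. norm (indicator {a..b} x * g x) \<partial>lborel)"
    using integral_norm_bound[of lborel "\<lambda>x. indicator {a..b} x * g x"] by simp
  also have "\<dots> \<le> (\<integral>x. R * indicator {a..b} x \<partial>lborel)"
  proof (rule integral_mono')
    show "integrable lborel (\<lambda>x. R * indicator {a..b} x)"
      by (intro integrable_mult_right integrable_real_indicator) (auto simp: emeasure_lborel_Icc_eq)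
    fix x :: real
    show "norm (indicator {a..b} x * g x) \<le> R * indicator {a..b} x"
      using g[of x] by (cases "x \<in> {a..b}") auto
    show "0 \<le> R * indicator {a..b} x" using R by simp
  qed
  also have "\<dots> = R * (b - a)" using ab by simp
  finally show ?thesis .
qed

lemma exp_minus_interval_integral_le:
  fixes g :: "real \<Rightarrow> real"
  assumes "a \<le> b" "R \<ge> 0" "\<And>x. x \<in> {a..b} \<Longrightarrow> \<bar>g x\<bar> \<le> R" "R * (b - a) \<le> 1"
  shows "exp (- (LBINT x=a..b. g x)) \<le> exp 1"
proof -
  have "\<bar>LBINT x=a..b. g x\<bar> \<le> R * (b - a)" by (rule abs_interval_integral_le) (use assms in auto)
  thus ?thesis using assms(4) by simp
qed

text \<open>For rates bounded by \<open>R\<close> on \<open>[s,t]\<close> with \<open>R (t - s) \<le> 1\<close>, a jump by \<open>d\<close> within \<open>[s,t]\<close>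
  has probability \<open>O((t - s)\<^sup>d)\<close>; the factors \<open>exp 1\<close> bound the survival factors from above,
  since the rates need not be nonnegative here.\<close>
lemma abs_btrans_le:
  fixes rate :: "real \<Rightarrow> nat \<Rightarrow> real"
  assumes R: "R \<ge> 0" and bd: "\<And>u k. u \<in> {s..t} \<Longrightarrow> \<bar>rate u k\<bar> \<le> R"
    and small: "R * (t - s) \<le> 1"
  shows "u \<in> {s..t} \<Longrightarrow> \<bar>btrans rate s u k d\<bar> \<le> exp 1 * (exp 1 * R * (t - s)) ^ d"
proof (induction d arbitrary: u)
  case 0
  have "exp (- (LBINT x=s..u. rate x k)) \<le> exp 1"
  proof (rule exp_minus_interval_integral_le)
    show "R * (u - s) \<le> 1" using 0 small R by (smt (verit) atLeastAtMost_iff mult_left_mono)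
  qed (use R bd 0 in auto)
  thus ?case by simp
next
  case (Suc d)
  define E where "E = exp (1::real)"
  have E0: "E \<ge> 0" and h0: "t - s \<ge> 0" using Suc.prems unfolding E_def by auto
  let ?B = "E * (E * R * (t - s)) ^ d * R * E"
  have "\<bar>btrans rate s w k d * rate w (k + d) * exp (- (LBINT v=w..u. rate v (k + Suc d)))\<bar> \<le> ?B"
    if w: "w \<in> {s..u}" for w
  proof -
    have w': "w \<in> {s..t}" using w Suc.prems by auto
    have "exp (- (LBINT v=w..u. rate v (k + Suc d))) \<le> E"
      unfolding E_def
    proof (rule exp_minus_interval_integral_le)
      have "u - w \<le> t - s" using w Suc.prems by auto
      thus "R * (u - w) \<le> 1" using small R by (smt (verit) mult_left_mono)
    qed (use R bd w Suc.prems in auto)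
    hence "\<bar>btrans rate s w k d\<bar> * \<bar>rate w (k + d)\<bar> * \<bar>exp (- (LBINT v=w..u. rate v (k + Suc d)))\<bar>
        \<le> (E * (E * R * (t - s)) ^ d) * R * E"
      using Suc.IH[OF w'] bd[OF w'] E0 R h0 unfolding E_def by (intro mult_mono) auto
    thus ?thesis by (simp add: abs_mult)
  qed
  hence "\<bar>btrans rate s u k (Suc d)\<bar> \<le> ?B * (u - s)"
    unfolding btrans.simps by (intro abs_interval_integral_le) (use Suc.prems E0 R h0 in auto)
  also have "\<dots> \<le> ?B * (t - s)"
    using Suc.prems E0 R h0 by (intro mult_left_mono) auto
  also have "\<dots> = E * (E * R * (t - s)) ^ Suc d" by (simp add: algebra_simps)
  finally show ?case unfolding E_def .
qed

lemma prate_bounded: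
  assumes j: "1 \<le> j"
  shows "\<exists>R\<ge>0. \<forall>u\<in>{0..T}. \<forall>k. \<bar>prate j u k\<bar> \<le> R"
proof -
  have "\<exists>R. \<forall>u\<in>{0..T}. \<bar>prate j u k\<bar> \<le> R" for k
  proof -
    have "compact ((\<lambda>u. prate j u k) ` {0..T})"
      by (intro compact_continuous_image continuous_on_prate[OF j] compact_Icc)
    then obtain a where "\<forall>x\<in>(\<lambda>u. prate j u k) ` {0..T}. norm x \<le> a"
      unfolding bounded_iff by (metis compact_imp_bounded bounded_iff)
    thus ?thesis by auto
  qed
  then obtain Rf where Rf: "\<forall>k. \<forall>u\<in>{0..T}. \<bar>prate j u k\<bar> \<le> Rf k" by metis
  define R where "R = (\<Sum>k<j. \<bar>Rf k\<bar>)"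
  have "\<bar>prate j u k\<bar> \<le> R" if u: "u \<in> {0..T}" for u k
  proof (cases "k < j")
    case True
    have "\<bar>prate j u k\<bar> \<le> \<bar>Rf k\<bar>" using Rf u by (meson abs_ge_self order.trans)
    also have "\<dots> \<le> R" unfolding R_def by (rule member_le_sum) (use True in auto)
    finally show ?thesis .
  qed (use j in \<open>auto simp: prate_def R_def sum_nonneg\<close>)
  moreover have "R \<ge> 0" unfolding R_def by (simp add: sum_nonneg)
  ultimately show ?thesis by blast
qed

lemma ex_pos_Ioo_iff_eventually_at_left:
  fixes t :: real
  shows "(\<exists>e>0. \<forall>u\<in>{t-e<..<t}. P u) \<longleftrightarrow> eventually P (at_left t)"
  unfolding eventually_at_left_field
proof
  assume "\<exists>e>0. \<forall>u\<in>{t-e<..<t}. P u"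
  then obtain e where "e > 0" "\<forall>u\<in>{t-e<..<t}. P u" by blast
  thus "\<exists>b<t. \<forall>y>b. y < t \<longrightarrow> P y" by (intro exI[of _ "t - e"]) auto
next
  assume "\<exists>b<t. \<forall>y>b. y < t \<longrightarrow> P y"
  then obtain b where "b < t" "\<forall>y>b. y < t \<longrightarrow> P y" by blast
  thus "\<exists>e>0. \<forall>u\<in>{t-e<..<t}. P u" by (intro exI[of _ "t - b"]) auto
qed

lemma ex_pos_Ico_iff_eventually_at_right:
  fixes t :: real
  shows "(\<exists>e>0. \<forall>u\<in>{t..<t+e}. P u) \<longleftrightarrow> P t \<and> eventually P (at_right t)"
  unfolding eventually_at_right_field
proof
  assume "\<exists>e>0. \<forall>u\<in>{t..<t+e}. P u"
  then obtain e where "e > 0" "\<forall>u\<in>{t..<t+e}. P u" by blast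
  thus "P t \<and> (\<exists>b>t. \<forall>y>t. y < b \<longrightarrow> P y)" by (intro conjI exI[of _ "t + e"]) auto
next
  assume "P t \<and> (\<exists>b>t. \<forall>y>t. y < b \<longrightarrow> P y)"
  then obtain b where "P t" "b > t" "\<forall>y>t. y < b \<longrightarrow> P y" by blast
  thus "\<exists>e>0. \<forall>u\<in>{t..<t+e}. P u" by (intro exI[of _ "b - t"]) (auto simp: order.order_iff_strict)
qed

lemma left_lim_eqI:
  assumes "eventually (\<lambda>u. f u = c) (at_left (t::real))"
  shows "left_lim f t = c"
  unfolding left_lim_def ex_pos_Ioo_iff_eventually_at_left
proof (rule the_equality)
  fix c' assume "eventually (\<lambda>u. f u = c') (at_left t)"
  with assms have "eventually (\<lambda>_. c' = c) (at_left t)" by eventually_elim simp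
  thus "c' = c" by (simp add: trivial_limit_at_left_real)
qed (fact assms)

lemma cadlag_eventually_at_right:
  "cadlag f \<Longrightarrow> t \<ge> 0 \<Longrightarrow> eventually (\<lambda>u. f u = f t) (at_right t)"
  unfolding cadlag_def ex_pos_Ico_iff_eventually_at_right by blast

lemma cadlag_eventually_at_left:
  assumes "cadlag f" "t > 0"
  shows "eventually (\<lambda>u. f u = left_lim f t) (at_left t)"
proof -
  obtain c where "eventually (\<lambda>u. f u = c) (at_left t)"
    using assms unfolding cadlag_def ex_pos_Ioo_iff_eventually_at_left by force
  thus ?thesis by (simp add: left_lim_eqI)
qed

lemma cadlag_left_lim_attained:
  assumes "cadlag f" "t > 0"
  obtains u where "0 \<le> u" "u < t" "\<forall>v\<in>{u..<t}. f v = left_lim f t"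
proof -
  obtain b where b: "b < t" "\<forall>v>b. v < t \<longrightarrow> f v = left_lim f t"
    using cadlag_eventually_at_left[OF assms] unfolding eventually_at_left_field by blast
  define u where "u = max (t / 2) ((b + t) / 2)"
  have "0 \<le> u" "u < t" "b < u" using assms(2) b(1) unfolding u_def by (auto simp: less_max_iff_disj)
  thus ?thesis using b(2) that by auto
qed

lemma cadlag_comp_finite:
  assumes J: "finite J" and cd: "\<forall>j\<in>J. cadlag (f j)"
    and resp: "\<And>I I'. (\<forall>j\<in>J. I j = I' j) \<Longrightarrow> g I = g I'"
  shows "cadlag (\<lambda>t. g (\<lambda>j. f j t))"
    and "t > 0 \<Longrightarrow> left_lim (\<lambda>t. g (\<lambda>j. f j t)) t = g (\<lambda>j. left_lim (f j) t)"
proof -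
  have right: "eventually (\<lambda>u. g (\<lambda>j. f j u) = g (\<lambda>j. f j t)) (at_right t)" if "t \<ge> 0" for t
  proof -
    have "eventually (\<lambda>u. \<forall>j\<in>J. f j u = f j t) (at_right t)"
      using cd that by (intro eventually_ball_finite J) (auto intro: cadlag_eventually_at_right)
    thus ?thesis by eventually_elim (rule resp)
  qed
  have left: "eventually (\<lambda>u. g (\<lambda>j. f j u) = g (\<lambda>j. left_lim (f j) t)) (at_left t)" if "t > 0" for t
  proof -
    have "eventually (\<lambda>u. \<forall>j\<in>J. f j u = left_lim (f j) t) (at_left t)"
      using cd that by (intro eventually_ball_finite J) (auto intro: cadlag_eventually_at_left)
    thus ?thesis by eventually_elim (rule resp)
  qed
  show "cadlag (\<lambda>t. g (\<lambda>j. f j t))"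
    unfolding cadlag_def ex_pos_Ioo_iff_eventually_at_left ex_pos_Ico_iff_eventually_at_right
    using right left by blast
  show "t > 0 \<Longrightarrow> left_lim (\<lambda>t. g (\<lambda>j. f j t)) t = g (\<lambda>j. left_lim (f j) t)"
    by (rule left_lim_eqI[OF left])
qed

text \<open>Right-continuity lets a cadlag path inherit monotonicity and bounds from the rationals.\<close>
lemma cadlag_mono_on_bounded_if_rat:
  fixes f :: "real \<Rightarrow> 'b::order"
  assumes cd: "cadlag f" and bd: "\<forall>q\<in>\<rat>. q \<ge> 0 \<longrightarrow> f q \<le> c"
    and mo: "\<forall>q\<in>\<rat>. \<forall>r\<in>\<rat>. 0 \<le> q \<longrightarrow> q \<le> r \<longrightarrow> f q \<le> f r"
  shows "mono_on {0..} f" "\<forall>t\<ge>0. f t \<le> c"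
proof -
  have rat: "\<exists>q\<in>\<rat>. t < q \<and> q < t' \<and> f q = f t" if t: "t \<ge> 0" "t < t'" for t t'
  proof -
    obtain b where b: "b > t" "\<forall>u>t. u < b \<longrightarrow> f u = f t"
      using cadlag_eventually_at_right[OF cd t(1)] unfolding eventually_at_right_field by blast
    have "t < min b t'" using b(1) t(2) by simp
    then obtain q where "q \<in> \<rat>" "t < q" "q < min b t'" using Rats_dense_in_real by blast
    thus ?thesis using b(2) by auto
  qed
  show "\<forall>t\<ge>0. f t \<le> c"
  proof (intro allI impI)
    fix t :: real assume "t \<ge> 0"
    then obtain q where q: "q \<in> \<rat>" "t < q" "f q = f t" using rat[of t "t+1"] by auto
    hence "f q \<le> c" using bd \<open>t \<ge> 0\<close> by (meson less_eq_real_def order.trans)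
    thus "f t \<le> c" using q(3) by simp
  qed
  show "mono_on {0..} f"
  proof (rule mono_onI)
    fix t t' :: real assume tt: "t \<in> {0..}" "t' \<in> {0..}" "t \<le> t'"
    show "f t \<le> f t'"
    proof (cases "t = t'")
      case False
      obtain q where q: "q \<in> \<rat>" "t < q" "q < t'" "f q = f t" using rat[of t t'] tt False by auto
      obtain q' where q': "q' \<in> \<rat>" "t' < q'" "f q' = f t'" using rat[of t' "t'+1"] tt by auto
      have "f q \<le> f q'" using mo q(1) q'(1) q(2,3) q'(2) tt by simp
      thus ?thesis using q q' by simp
    qed simp
  qed
qed

lemma sum_increment_ge_2_cases:
  fixes x y :: "'i \<Rightarrow> nat"
  assumes J: "finite J" and le: "\<forall>j\<in>J. y j \<le> x j" and s: "(\<Sum>j\<in>J. y j) + 2 \<le> (\<Sum>j\<in>J. x j)"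
  shows "(\<exists>j\<in>J. y j + 2 \<le> x j) \<or> (\<exists>j1\<in>J. \<exists>j2\<in>J. j1 \<noteq> j2 \<and> y j1 \<noteq> x j1 \<and> y j2 \<noteq> x j2)"
proof (rule ccontr)
  assume "\<not> ?thesis"
  hence a: "\<forall>j\<in>J. x j < y j + 2" and b: "\<forall>j1\<in>J. \<forall>j2\<in>J. y j1 \<noteq> x j1 \<longrightarrow> y j2 \<noteq> x j2 \<longrightarrow> j1 = j2"
    by (auto simp: not_le)
  define D where "D = {j\<in>J. y j \<noteq> x j}"
  have cD: "card D \<le> 1"
    using b J card_le_Suc0_iff_eq[of D] unfolding D_def by auto
  have "(\<Sum>j\<in>J. x j) = (\<Sum>j\<in>J. y j) + (\<Sum>j\<in>J. x j - y j)"
    using le by (simp add: sum.distrib[symmetric])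
  also have "(\<Sum>j\<in>J. x j - y j) = (\<Sum>j\<in>D. x j - y j)"
    by (rule sum.mono_neutral_right) (use J in \<open>auto simp: D_def\<close>)
  also have "\<dots> \<le> card D" using a sum_mono[of D "\<lambda>j. x j - y j" "\<lambda>_. 1"] unfolding D_def by fastforce
  finally show False using s cD by linarith
qed

locale birth_process_space = prob_space M for M :: "'a measure" +
  fixes X :: "real \<Rightarrow> 'a \<Rightarrow> nat" and rate :: "real \<Rightarrow> nat \<Rightarrow> real"
  assumes birth: "birth_process M X rate"
begin

lemma measurable_X[measurable]: "X t \<in> measurable M (count_space UNIV)"
  using birth unfolding birth_process_def by auto

lemma AE_X_0: "AE \<omega> in M. X 0 \<omega> = 0"
  using birth unfolding birth_process_def by auto

lemma AE_cadlag_X: "AE \<omega> in M. cadlag (\<lambda>t. X t \<omega>)"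
  using birth unfolding birth_process_def by auto

lemma prob_X_X:
  assumes "0 \<le> s" "s \<le> t"
  shows "prob {\<omega>\<in>space M. X s \<omega> = k \<and> X t \<omega> = m} = prob {\<omega>\<in>space M. X s \<omega> = k} * birth_trans rate s t k m"
proof -
  have "space M \<in> nat_filt M X s" unfolding nat_filt_def by (rule sigma_sets_top)
  with birth assms have "prob (space M \<inter> {\<omega>\<in>space M. X s \<omega> = k \<and> X t \<omega> = m})
      = prob (space M \<inter> {\<omega>\<in>space M. X s \<omega> = k}) * birth_trans rate s t k m"
    unfolding birth_process_def by blast
  thus ?thesis by (simp add: Int_absorb1)
qed

lemma prob_X_eq_btrans:
  assumes "t \<ge> 0"
  shows "prob {\<omega>\<in>space M. X t \<omega> = k} = btrans rate 0 t 0 k"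
proof -
  have "prob {\<omega>\<in>space M. X t \<omega> = k} = prob {\<omega>\<in>space M. X 0 \<omega> = 0 \<and> X t \<omega> = k}"
    by (rule finite_measure_eq_AE) (use AE_X_0 in auto)
  also have "\<dots> = prob {\<omega>\<in>space M. X 0 \<omega> = 0} * birth_trans rate 0 t 0 k"
    by (rule prob_X_X) (use assms in auto)
  also have "prob {\<omega>\<in>space M. X 0 \<omega> = 0} = 1"
    using AE_X_0 by (subst prob_eq_1) auto
  finally show ?thesis by (simp add: birth_trans_def)
qed

lemma events_Collect_X2: "{\<omega>\<in>space M. P (X s \<omega>) (X t \<omega>)} \<in> events"
  by measurable

lemma AE_X_mono:
  assumes "0 \<le> s" "s \<le> t"
  shows "AE \<omega> in M. X s \<omega> \<le> X t \<omega>"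
proof -
  have "AE \<omega> in M. m < k \<longrightarrow> \<not> (X s \<omega> = k \<and> X t \<omega> = m)" for k m
  proof (cases "m < k")
    case True
    have "prob {\<omega>\<in>space M. X s \<omega> = k \<and> X t \<omega> = m} = 0"
      using prob_X_X[OF assms, of k m] True by (simp add: birth_trans_def)
    hence "{\<omega>\<in>space M. X s \<omega> = k \<and> X t \<omega> = m} \<in> null_sets M"
      by (simp add: null_sets_def emeasure_eq_measure)
    from AE_not_in[OF this] AE_space show ?thesis by eventually_elim auto
  qed simp
  hence "AE \<omega> in M. \<forall>k m. m < k \<longrightarrow> \<not> (X s \<omega> = k \<and> X t \<omega> = m)"
    unfolding AE_all_countable by blast
  thus ?thesis by eventually_elim (metis not_le)
qed

end

locale prate_birth_process = prob_space M for M :: "'a measure" +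
  fixes X :: "real \<Rightarrow> 'a \<Rightarrow> nat" and j :: nat
  assumes birth_prate: "birth_process M X (prate j)" and j: "1 \<le> j"
begin

sublocale birth_process_space M X "prate j"
  by unfold_locales (fact birth_prate)

lemma prob_X_eq:
  assumes "t \<ge> 0" "k \<le> j - 1"
  shows "prob {\<omega>\<in>space M. X t \<omega> = k} = t ^ k / qint j t"
  using prob_X_eq_btrans btrans_prate_from_0 j assms by simp

lemma AE_X_le:
  assumes t: "t \<ge> 0"
  shows "AE \<omega> in M. X t \<omega> \<le> j - 1"
proof -
  have "{\<omega>\<in>space M. X t \<omega> \<le> j - 1} = (\<Union>k\<in>{..j-1}. {\<omega>\<in>space M. X t \<omega> = k})" by auto
  hence "prob {\<omega>\<in>space M. X t \<omega> \<le> j - 1} = (\<Sum>k\<in>{..j-1}. prob {\<omega>\<in>space M. X t \<omega> = k})"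
    by (simp, intro measure_finite_Union) (auto simp: disjoint_family_on_def)
  also have "\<dots> = (\<Sum>k<j. t ^ k / qint j t)"
    using prob_X_eq[OF t] j by (intro sum.cong) auto
  also have "\<dots> = 1"
    using qint_ge_1[OF t j] by (simp add: qint_def sum_divide_distrib[symmetric])
  finally show ?thesis by (subst (asm) prob_eq_1) auto
qed

lemma AE_X_regular:
  "AE \<omega> in M. cadlag (\<lambda>t. X t \<omega>) \<and> mono_on {0..} (\<lambda>t. X t \<omega>) \<and> (\<forall>t\<ge>0. X t \<omega> \<le> j - 1)"
proof -
  have "AE \<omega> in M. \<forall>q\<in>\<rat>. q \<ge> 0 \<longrightarrow> X q \<omega> \<le> j - 1"
    by (rule AE_ball_countable'[OF _ countable_rat]) (use AE_X_le in auto)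
  moreover have "AE \<omega> in M. \<forall>q\<in>\<rat>. \<forall>r\<in>\<rat>. 0 \<le> q \<longrightarrow> q \<le> r \<longrightarrow> X q \<omega> \<le> X r \<omega>"
    by (intro AE_ball_countable'[OF _ countable_rat]) (use AE_X_mono in auto)
  ultimately show ?thesis using AE_cadlag_X
  proof eventually_elim
    case (elim \<omega>)
    thus ?case using cadlag_mono_on_bounded_if_rat[of "\<lambda>t. X t \<omega>" "j - 1"] by auto
  qed
qed

lemma prob_increment_le_sum:
  assumes "0 \<le> a" "a \<le> b"
  shows "prob {\<omega>\<in>space M. X a \<omega> + d \<le> X b \<omega>}
       \<le> (\<Sum>k<j. \<Sum>m\<in>{k+d..<j}. prob {\<omega>\<in>space M. X a \<omega> = k \<and> X b \<omega> = m})"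
proof -
  define S where "S k m = {\<omega>\<in>space M. X a \<omega> = k \<and> X b \<omega> = m}" for k m
  have S: "S k m \<in> events" for k m unfolding S_def by measurable
  have "AE \<omega> in M. X a \<omega> \<le> j - 1 \<and> X b \<omega> \<le> j - 1"
    using AE_X_le[OF assms(1)] AE_X_le[OF order.trans[OF assms]] by eventually_elim auto
  hence "AE \<omega> in M. \<omega> \<in> {\<omega>\<in>space M. X a \<omega> + d \<le> X b \<omega>} \<longrightarrow> \<omega> \<in> (\<Union>k<j. \<Union>m\<in>{k+d..<j}. S k m)"
  proof eventually_elim
    case (elim \<omega>)
    thus ?case using j unfolding S_def by auto
  qed
  hence "prob {\<omega>\<in>space M. X a \<omega> + d \<le> X b \<omega>} \<le> prob (\<Union>k<j. \<Union>m\<in>{k+d..<j}. S k m)"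
    using S by (intro finite_measure_mono_AE) auto
  also have "\<dots> \<le> (\<Sum>k<j. prob (\<Union>m\<in>{k+d..<j}. S k m))"
    by (rule measure_UNION_le) (use S in auto)
  also have "\<dots> \<le> (\<Sum>k<j. \<Sum>m\<in>{k+d..<j}. prob (S k m))"
    by (intro sum_mono measure_UNION_le) (use S in auto)
  finally show ?thesis unfolding S_def .
qed

lemma prob_increment_le:
  assumes R: "R \<ge> 0" "\<forall>u\<in>{0..T}. \<forall>k. \<bar>prate j u k\<bar> \<le> R"
    and ab: "0 \<le> a" "a \<le> b" "b \<le> T" and small: "exp 1 * R * (b - a) \<le> 1"
  shows "prob {\<omega>\<in>space M. X a \<omega> + d \<le> X b \<omega>} \<le> real j * real j * exp 1 * (exp 1 * R * (b - a)) ^ d"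
proof -
  define x where "x = exp 1 * R * (b - a)"
  have x: "0 \<le> x" "x \<le> 1" using small R ab unfolding x_def by auto
  have "1 * (R * (b - a)) \<le> exp 1 * (R * (b - a))" using R ab by (intro mult_right_mono) auto
  moreover have "exp 1 * R * (b - a) = exp 1 * (R * (b - a))" by (simp add: mult.assoc)
  ultimately have Rsmall: "R * (b - a) \<le> 1" using small by linarith
  have bound: "prob {\<omega>\<in>space M. X a \<omega> = k \<and> X b \<omega> = m} \<le> exp 1 * x ^ d" if m: "k + d \<le> m" for k m
  proof -
    have "prob {\<omega>\<in>space M. X a \<omega> = k \<and> X b \<omega> = m}
        = prob {\<omega>\<in>space M. X a \<omega> = k} * btrans (prate j) a b k (m - k)"
      using prob_X_X[OF ab(1,2), of k m] m by (simp add: birth_trans_def)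
    also have "\<dots> \<le> prob {\<omega>\<in>space M. X a \<omega> = k} * \<bar>btrans (prate j) a b k (m - k)\<bar>"
      by (intro mult_left_mono) auto
    also have "\<dots> \<le> 1 * \<bar>btrans (prate j) a b k (m - k)\<bar>"
      by (intro mult_right_mono) auto
    also have "\<dots> \<le> exp 1 * x ^ (m - k)"
      unfolding x_def using abs_btrans_le[OF R(1) _ Rsmall, of "prate j" b k "m - k"] R(2) ab by auto
    also have "\<dots> \<le> exp 1 * x ^ d" using x m by (intro mult_left_mono power_decreasing) auto
    finally show ?thesis .
  qed
  have "prob {\<omega>\<in>space M. X a \<omega> + d \<le> X b \<omega>} \<le> (\<Sum>k<j. \<Sum>m\<in>{k+d..<j}. exp 1 * x ^ d)"
  proof -
    have "(\<Sum>k<j. \<Sum>m\<in>{k+d..<j}. prob {\<omega>\<in>space M. X a \<omega> = k \<and> X b \<omega> = m})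
        \<le> (\<Sum>k<j. \<Sum>m\<in>{k+d..<j}. exp 1 * x ^ d)"
      by (intro sum_mono bound) auto
    with prob_increment_le_sum[OF ab(1,2), of d] show ?thesis by linarith
  qed
  also have "\<dots> \<le> (\<Sum>k<j. real j * (exp 1 * x ^ d))"
    using x by (intro sum_mono) (simp add: mult_right_mono)
  finally show ?thesis unfolding x_def by simp
qed

text \<open>When \<open>exp 1 * R * (b - a) > 1\<close> the trivial bound 1 already has the required form.\<close>
lemma prob_change_le:
  "\<exists>K\<ge>0. \<forall>a b. 0 \<le> a \<longrightarrow> a \<le> b \<longrightarrow> b \<le> T \<longrightarrow>
     prob {\<omega>\<in>space M. X a \<omega> \<noteq> X b \<omega>} \<le> K * (b - a) \<and>
     prob {\<omega>\<in>space M. X a \<omega> + 2 \<le> X b \<omega>} \<le> K * (b - a)^2"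
proof -
  obtain R where R: "R \<ge> 0" "\<forall>u\<in>{0..T}. \<forall>k. \<bar>prate j u k\<bar> \<le> R" using prate_bounded[OF j] by blast
  define E where "E = exp (1::real)"
  have E1: "E \<ge> 1" unfolding E_def by simp
  define K where "K = real j * real j * E * E * R + real j * real j * E * E * E * R * R + E * R + E * E * R * R"
  have K0: "K \<ge> 0" unfolding K_def using R E1 by simp
  have "prob {\<omega>\<in>space M. X a \<omega> \<noteq> X b \<omega>} \<le> K * (b - a) \<and>
     prob {\<omega>\<in>space M. X a \<omega> + 2 \<le> X b \<omega>} \<le> K * (b - a)^2"
    if ab: "0 \<le> a" "a \<le> b" "b \<le> T" for a b
  proof -
    define h where "h = b - a"
    have h0: "h \<ge> 0" using ab unfolding h_def by simp
    have ne: "prob {\<omega>\<in>space M. X a \<omega> \<noteq> X b \<omega>} \<le> prob {\<omega>\<in>space M. X a \<omega> + 1 \<le> X b \<omega>}"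
    proof (rule finite_measure_mono_AE)
      from AE_X_mono[OF ab(1,2)]
      show "AE \<omega> in M. \<omega> \<in> {\<omega>\<in>space M. X a \<omega> \<noteq> X b \<omega>} \<longrightarrow> \<omega> \<in> {\<omega>\<in>space M. X a \<omega> + 1 \<le> X b \<omega>}"
        by eventually_elim auto
    qed (auto intro: events_Collect_X2)
    show ?thesis
    proof (cases "E * R * h \<le> 1")
      case True
      have small: "exp 1 * R * (b - a) \<le> 1" using True unfolding E_def h_def .
      have "prob {\<omega>\<in>space M. X a \<omega> + 1 \<le> X b \<omega>} \<le> real j * real j * E * (E * R * h) ^ 1"
        "prob {\<omega>\<in>space M. X a \<omega> + 2 \<le> X b \<omega>} \<le> real j * real j * E * (E * R * h) ^ 2"
        using prob_increment_le[OF R ab small, of 1] prob_increment_le[OF R ab small, of 2]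
        unfolding E_def h_def by simp_all
      moreover have "real j * real j * E * (E * R * h) ^ 1 \<le> K * h"
        unfolding K_def using R E1 h0 by (simp add: algebra_simps mult_nonneg_nonneg)
      moreover have "real j * real j * E * (E * R * h) ^ 2 \<le> K * h ^ 2"
        unfolding K_def using R E1 h0 by (simp add: algebra_simps power2_eq_square mult_nonneg_nonneg)
      ultimately show ?thesis using ne unfolding h_def by linarith
    next
      case False
      have "1 \<le> E * R * h" using False by simp
      also have "\<dots> \<le> K * h" unfolding K_def using R E1 h0 by (simp add: algebra_simps mult_nonneg_nonneg)
      finally have c1: "1 \<le> K * h" .
      have "1 \<le> (E * R * h)^2" using False by (simp add: power2_eq_square) (smt (verit) mult_le_cancel_left1)
      also have "\<dots> \<le> K * h ^ 2" unfolding K_def using R E1 h0 by (simp add: algebra_simps power2_eq_square mult_nonneg_nonneg)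
      finally have c2: "1 \<le> K * h ^ 2" .
      show ?thesis using c1 c2 prob_le_1 unfolding h_def by (meson order.trans)
    qed
  qed
  thus ?thesis using K0 by blast
qed

end
lemma (in prob_space) indep_vars_AE_cong:
  assumes X: "indep_vars M' X I" and XY: "AE x in M. \<forall>i\<in>I. X i x = Y i x"
    and Y: "\<And>i. i \<in> I \<Longrightarrow> random_variable (M' i) (Y i)"
  shows "indep_vars M' Y I"
proof (cases "I = {}")
  case True
  thus ?thesis using Y by (simp add: indep_vars_def2 indep_sets_def)
next
  case False
  have rX: "random_variable (M' i) (X i)" if "i \<in> I" for i
    using X that unfolding indep_vars_def2 by auto
  have "AE x in M. (\<lambda>i\<in>I. Y i x) = (\<lambda>i\<in>I. X i x)"
    using XY by eventually_elim (rule restrict_ext, simp)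
  hence "distr M (\<Pi>\<^sub>M i\<in>I. M' i) (\<lambda>x. \<lambda>i\<in>I. Y i x) = distr M (\<Pi>\<^sub>M i\<in>I. M' i) (\<lambda>x. \<lambda>i\<in>I. X i x)"
    using rX Y by (intro distr_cong_AE measurable_restrict) auto
  also have "\<dots> = (\<Pi>\<^sub>M i\<in>I. distr M (M' i) (X i))"
    using X rX False by (simp add: indep_vars_iff_distr_eq_PiM')
  also have "\<dots> = (\<Pi>\<^sub>M i\<in>I. distr M (M' i) (Y i))"
  proof (intro PiM_cong distr_cong_AE refl)
    fix i assume "i \<in> I"
    from XY show "AE x in M. X i x = Y i x" by eventually_elim (use \<open>i \<in> I\<close> in blast)
  qed (use rX Y in auto)
  finally show ?thesis using Y False by (simp add: indep_vars_iff_distr_eq_PiM')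
qed

section \<open>The Mallows process driven by independent birth processes\<close>

abbreviation path_space :: "(real \<Rightarrow> nat) measure" where
  "path_space \<equiv> Pi\<^sub>M {0..} (\<lambda>_. count_space UNIV)"

locale mallows_births = prob_space M for M :: "'a measure" +
  fixes n :: nat and B :: "nat \<Rightarrow> real \<Rightarrow> 'a \<Rightarrow> nat"
  assumes births: "\<forall>j\<in>{1..n}. birth_process M (B j) (prate j)"
    and indep: "indep_vars (\<lambda>_. path_space) (\<lambda>j \<omega>. restrict (\<lambda>t. B j t \<omega>) {0..}) {1..n}"
begin

definition MB :: "real \<Rightarrow> 'a \<Rightarrow> (nat \<Rightarrow> nat)" where
  "MB t \<omega> = Phi n (\<lambda>j. B j t \<omega>)"

lemma prate_birth_process_B: "j \<in> {1..n} \<Longrightarrow> prate_birth_process M (B j) j"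
  unfolding prate_birth_process_def prate_birth_process_axioms_def using births prob_space_axioms by auto

lemma measurable_B: "j \<in> {1..n} \<Longrightarrow> B j t \<in> measurable M (count_space UNIV)"
  using births unfolding birth_process_def by auto

lemma events_Collect_B: "j \<in> {1..n} \<Longrightarrow> {\<omega>\<in>space M. P (B j t \<omega>)} \<in> events"
  using measurable_sets[OF measurable_B[of j t], of "{x. P x}"] by (simp add: vimage_def Int_def conj_commute)

lemma events_Collect_B2:
  assumes "j \<in> {1..n}"
  shows "{\<omega>\<in>space M. P (B j s \<omega>) (B j t \<omega>)} \<in> events"
proof -
  interpret prate_birth_process M "B j" j by (rule prate_birth_process_B[OF assms])
  show ?thesis by (rule events_Collect_X2)
qed

text \<open>Events determined by the vector \<open>(B\<^sub>1(t), \<dots>, B\<^sub>n(t))\<close> are countable unions of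
  events \<open>{B(t) = c}\<close>.\<close>
lemma events_Collect_B_vector:
  assumes resp: "\<And>I I'. (\<forall>j\<in>{1..n}. I j = I' j) \<Longrightarrow> P I = P I'"
  shows "{\<omega>\<in>space M. P (\<lambda>j. B j t \<omega>)} \<in> events"
proof -
  let ?C = "PiE {1..n} (\<lambda>_. UNIV :: nat set) \<inter> {c. P c}"
  have "{\<omega>\<in>space M. P (\<lambda>j. B j t \<omega>)} = (\<Union>c\<in>?C. {\<omega>\<in>space M. \<forall>j\<in>{1..n}. B j t \<omega> = c j})"
  proof (intro equalityI subsetI)
    fix \<omega> assume \<omega>: "\<omega> \<in> {\<omega>\<in>space M. P (\<lambda>j. B j t \<omega>)}"
    have "P (restrict (\<lambda>j. B j t \<omega>) {1..n}) = P (\<lambda>j. B j t \<omega>)" by (rule resp) simp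
    thus "\<omega> \<in> (\<Union>c\<in>?C. {\<omega>\<in>space M. \<forall>j\<in>{1..n}. B j t \<omega> = c j})"
      using \<omega> by (intro UN_I[of "restrict (\<lambda>j. B j t \<omega>) {1..n}"]) auto
  next
    fix \<omega> assume "\<omega> \<in> (\<Union>c\<in>?C. {\<omega>\<in>space M. \<forall>j\<in>{1..n}. B j t \<omega> = c j})"
    then obtain c where c: "c \<in> ?C" "\<omega> \<in> space M" "\<forall>j\<in>{1..n}. B j t \<omega> = c j" by blast
    have "P (\<lambda>j. B j t \<omega>) = P c" by (rule resp) (use c in auto)
    thus "\<omega> \<in> {\<omega>\<in>space M. P (\<lambda>j. B j t \<omega>)}" using c by auto
  qed
  moreover have "countable (PiE {1..n} (\<lambda>_. UNIV :: nat set))" by (rule countable_PiE) auto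
  hence "countable ?C" by (rule countable_subset[rotated]) auto
  moreover have "{\<omega>\<in>space M. \<forall>j\<in>{1..n}. B j t \<omega> = c j} \<in> events" for c
    by (rule sets.sets_Collect_finite_All) (auto intro: events_Collect_B)
  ultimately show ?thesis by (auto intro: sets.countable_UN'')
qed

lemma measurable_MB: "MB t \<in> measurable M (count_space UNIV)"
proof (rule measurableI)
  fix A :: "(nat \<Rightarrow> nat) set"
  have "MB t -` A \<inter> space M = {\<omega>\<in>space M. Phi n (\<lambda>j. B j t \<omega>) \<in> A}" unfolding MB_def by auto
  also have "\<dots> \<in> events" by (rule events_Collect_B_vector) (metis Phi_cong)
  finally show "MB t -` A \<inter> space M \<in> events" .
qed auto

lemma events_Collect_MB: "{\<omega>\<in>space M. P (MB t \<omega>)} \<in> events"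
  using measurable_sets[OF measurable_MB[of t], of "{x. P x}"] by (simp add: vimage_def Int_def conj_commute)

definition regular_sample :: "'a \<Rightarrow> bool" where
  "regular_sample \<omega> \<longleftrightarrow>
     (\<forall>j\<in>{1..n}. cadlag (\<lambda>t. B j t \<omega>) \<and> mono_on {0..} (\<lambda>t. B j t \<omega>) \<and> (\<forall>t\<ge>0. B j t \<omega> \<le> j - 1))"

lemma AE_regular_sample: "AE \<omega> in M. regular_sample \<omega>"
  unfolding regular_sample_def
  by (rule AE_finite_allI) (use prate_birth_process.AE_X_regular[OF prate_birth_process_B] in auto)

lemma
  assumes "regular_sample \<omega>" "t \<ge> 0"
  shows MB_in_Sn: "MB t \<omega> \<in> Sn n" and invj_MB: "\<forall>j\<in>{1..n}. invj j (MB t \<omega>) = B j t \<omega>"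
proof -
  have "\<forall>j\<in>{1..n}. B j t \<omega> \<le> j - 1" using assms unfolding regular_sample_def by blast
  thus "MB t \<omega> \<in> Sn n" "\<forall>j\<in>{1..n}. invj j (MB t \<omega>) = B j t \<omega>"
    unfolding MB_def by (fact Phi_in_Sn, fact invj_Phi)
qed

lemma
  assumes "regular_sample \<omega>"
  shows cadlag_MB: "cadlag (\<lambda>t. MB t \<omega>)"
    and left_lim_MB: "t > 0 \<Longrightarrow> left_lim (\<lambda>t. MB t \<omega>) t = Phi n (\<lambda>j. left_lim (\<lambda>t. B j t \<omega>) t)"
  using cadlag_comp_finite[of "{1..n}" "\<lambda>j t. B j t \<omega>" "Phi n", OF _ _ Phi_cong] assms
  unfolding MB_def[abs_def] regular_sample_def by auto

lemma prob_MB_eq_Inter_B: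
  assumes t: "t \<ge> 0" and \<sigma>: "\<sigma> \<in> Sn n"
  shows "prob {\<omega>\<in>space M. MB t \<omega> = \<sigma>} = prob {\<omega>\<in>space M. \<forall>j\<in>{1..n}. B j t \<omega> = invj j \<sigma>}"
proof (rule finite_measure_eq_AE)
  from AE_regular_sample show "AE \<omega> in M. (\<omega> \<in> {\<omega>\<in>space M. MB t \<omega> = \<sigma>}) =
      (\<omega> \<in> {\<omega>\<in>space M. \<forall>j\<in>{1..n}. B j t \<omega> = invj j \<sigma>})"
  proof eventually_elim
    case (elim \<omega>)
    have "MB t \<omega> = \<sigma> \<longleftrightarrow> (\<forall>j\<in>{1..n}. B j t \<omega> = invj j \<sigma>)"
      using invj_MB[OF elim t] Phi_eqI[OF \<sigma>, of "\<lambda>j. B j t \<omega>"] unfolding MB_def by auto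
    thus ?case by auto
  qed
  show "{\<omega>\<in>space M. \<forall>j\<in>{1..n}. B j t \<omega> = invj j \<sigma>} \<in> events"
    by (rule sets.sets_Collect_finite_All) (auto intro: events_Collect_B)
qed (rule events_Collect_MB)

end

context mallows_births
begin

definition Bpath :: "nat \<Rightarrow> 'a \<Rightarrow> real \<Rightarrow> nat" where
  "Bpath j \<omega> = restrict (\<lambda>t. B j t \<omega>) {0..}"

definition Bsigma :: "nat \<Rightarrow> 'a set set" where
  "Bsigma j = sigma_sets (space M) {Bpath j -` A \<inter> space M | A. A \<in> sets path_space}"

lemma indep_sets_Bsigma: "indep_sets Bsigma {1..n}"
  using indep unfolding indep_vars_def Bsigma_def Bpath_def by auto

lemma sigma_algebra_Bsigma: "sigma_algebra (space M) (Bsigma j)"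
  unfolding Bsigma_def by (rule sigma_algebra_sigma_sets) auto

lemma measurable_Bpath: "j \<in> {1..n} \<Longrightarrow> Bpath j \<in> measurable M path_space"
  using indep unfolding indep_vars_def Bpath_def by auto

lemma Bsigma_subset_events: "j \<in> {1..n} \<Longrightarrow> Bsigma j \<subseteq> events"
  unfolding Bsigma_def
proof (rule sets.sigma_sets_subset, safe)
  fix A assume "j \<in> {1..n}" "A \<in> sets path_space"
  thus "Bpath j -` A \<inter> space M \<in> events" by (intro measurable_sets[OF measurable_Bpath])
qed

lemma Collect_B_in_Bsigma:
  assumes "t \<ge> 0"
  shows "{\<omega>\<in>space M. P (B j t \<omega>)} \<in> Bsigma j"
proof -
  have "(\<lambda>f. f t) \<in> measurable path_space (count_space UNIV)"
    using measurable_component_singleton[of t "{0..}" "\<lambda>_. count_space UNIV"] assms by simp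
  hence S: "(\<lambda>f. f t) -` {x. P x} \<inter> space path_space \<in> sets path_space"
    by (rule measurable_sets) simp
  have "Bpath j \<omega> \<in> space path_space" for \<omega> unfolding Bpath_def by (simp add: space_PiM)
  hence eq: "{\<omega>\<in>space M. P (B j t \<omega>)} = Bpath j -` ((\<lambda>f. f t) -` {x. P x} \<inter> space path_space) \<inter> space M"
    using assms by (auto simp: Bpath_def)
  show ?thesis unfolding eq Bsigma_def by (rule sigma_sets.Basic) (use S in blast)
qed

lemma Collect_B2_in_Bsigma:
  assumes "s \<ge> 0" "t \<ge> 0"
  shows "{\<omega>\<in>space M. P (B j s \<omega>) (B j t \<omega>)} \<in> Bsigma j"
proof -
  interpret F: sigma_algebra "space M" "Bsigma j" by (rule sigma_algebra_Bsigma)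
  have "{\<omega>\<in>space M. P (B j s \<omega>) (B j t \<omega>)}
      = (\<Union>ab\<in>{ab. P (fst ab) (snd ab)}. {\<omega>\<in>space M. B j s \<omega> = fst ab} \<inter> {\<omega>\<in>space M. B j t \<omega> = snd ab})"
    by auto
  also have "\<dots> \<in> Bsigma j"
    by (intro F.countable_UN'' F.Int Collect_B_in_Bsigma assms) auto
  finally show ?thesis .
qed

lemma nat_filt_subset_Bsigma:
  assumes "s \<ge> 0"
  shows "nat_filt M (B j) s \<subseteq> Bsigma j"
  unfolding nat_filt_def
proof (rule sigma_algebra.sigma_sets_subset[OF sigma_algebra_Bsigma], safe)
  fix r A assume r: "0 \<le> r" "r \<le> s"
  have "B j r -` A \<inter> space M = {\<omega>\<in>space M. B j r \<omega> \<in> A}" by auto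
  also have "\<dots> \<in> Bsigma j" by (rule Collect_B_in_Bsigma) (use r in auto)
  finally show "B j r -` A \<inter> space M \<in> Bsigma j" .
qed

lemma prob_INT_Bsigma:
  assumes "\<And>j. j \<in> {1..n} \<Longrightarrow> E j \<in> Bsigma j"
  shows "prob (space M \<inter> (\<Inter>j\<in>{1..n}. E j)) = (\<Prod>j\<in>{1..n}. prob (E j))"
proof (cases "n = 0")
  case False
  have "E 1 \<in> events" using Bsigma_subset_events[of 1] assms[of 1] False by auto
  hence "E 1 \<subseteq> space M" by (rule sets.sets_into_space)
  hence "space M \<inter> (\<Inter>j\<in>{1..n}. E j) = (\<Inter>j\<in>{1..n}. E j)" using False by auto
  moreover have "prob (\<Inter>j\<in>{1..n}. E j) = (\<Prod>j\<in>{1..n}. prob (E j))"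
    by (rule indep_setsD[OF indep_sets_Bsigma]) (use False assms in auto)
  ultimately show ?thesis by simp
qed (simp add: prob_space)

lemma prob_MB_eq_mallows:
  assumes t: "t \<ge> 0" and \<sigma>: "\<sigma> \<in> Sn n"
  shows "prob {\<omega>\<in>space M. MB t \<omega> = \<sigma>} = mallows n t \<sigma>"
proof -
  have "prob {\<omega>\<in>space M. MB t \<omega> = \<sigma>} = prob (space M \<inter> (\<Inter>j\<in>{1..n}. {\<omega>\<in>space M. B j t \<omega> = invj j \<sigma>}))"
    unfolding prob_MB_eq_Inter_B[OF assms] by (rule arg_cong[where f=prob]) auto
  also have "\<dots> = (\<Prod>j\<in>{1..n}. prob {\<omega>\<in>space M. B j t \<omega> = invj j \<sigma>})"
    by (rule prob_INT_Bsigma) (rule Collect_B_in_Bsigma[OF t])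
  also have "\<dots> = (\<Prod>j\<in>{1..n}. t ^ invj j \<sigma> / qint j t)"
    using prate_birth_process.prob_X_eq[OF prate_birth_process_B t invj_le] by simp
  also have "\<dots> = t ^ Inv n \<sigma> / (\<Prod>k\<in>{1..n}. \<Sum>l<k. t ^ l)"
    by (simp add: prod_dividef Inv_def power_sum qint_def)
  finally show ?thesis unfolding mallows_def .
qed

lemma indep_vars_invj_MB:
  "indep_vars (\<lambda>_. path_space) (\<lambda>j \<omega>. restrict (\<lambda>t. invj j (MB t \<omega>)) {0..}) {1..n}"
proof (rule indep_vars_AE_cong[OF indep])
  show "AE \<omega> in M. \<forall>j\<in>{1..n}. restrict (\<lambda>t. B j t \<omega>) {0..} = restrict (\<lambda>t. invj j (MB t \<omega>)) {0..}"
    using AE_regular_sample by eventually_elim (use invj_MB in \<open>auto intro!: restrict_ext\<close>)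
  show "(\<lambda>\<omega>. restrict (\<lambda>t. invj j (MB t \<omega>)) {0..}) \<in> measurable M path_space" for j
    by (intro measurable_restrict measurable_compose[OF measurable_MB measurable_count_space])
qed

lemma AE_mono_invj_MB:
  assumes j: "j \<in> {1..n}"
  shows "AE \<omega> in M. mono_on {0..} (\<lambda>t. invj j (MB t \<omega>))"
  using AE_regular_sample
proof eventually_elim
  case (elim \<omega>)
  have mono: "mono_on {0..} (\<lambda>t. B j t \<omega>)" using elim j unfolding regular_sample_def by blast
  show ?case
  proof (rule mono_onI)
    fix r s :: real assume "r \<in> {0..}" "s \<in> {0..}" "r \<le> s"
    thus "invj j (MB r \<omega>) \<le> invj j (MB s \<omega>)"
      using invj_MB[OF elim, of r] invj_MB[OF elim, of s] j mono_onD[OF mono] by simp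
  qed
qed

lemma mallows_process_MB: "mallows_process M n MB"
  unfolding mallows_process_def
proof (intro conjI allI impI ballI measurable_MB prob_MB_eq_mallows)
  show "AE \<omega> in M. \<forall>t\<ge>0. MB t \<omega> \<in> Sn n"
    using AE_regular_sample by eventually_elim (auto dest: MB_in_Sn)
  show "AE \<omega> in M. cadlag (\<lambda>t. MB t \<omega>)"
    using AE_regular_sample by eventually_elim (rule cadlag_MB)
qed

end

section \<open>Inversions increase by single steps\<close>

lemma grid_cell_exists:
  fixes t :: real
  assumes t: "0 < t" "t \<le> real N" and m: "m \<ge> 1"
  obtains i where "i < N * m" "real i / real m < t" "t \<le> real (Suc i) / real m"
proof -
  define i where "i = nat (\<lceil>t * real m\<rceil> - 1)"
  have pos: "t * real m > 0" using t m by simp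
  hence ri: "real i = real_of_int \<lceil>t * real m\<rceil> - 1" unfolding i_def by (simp add: one_le_ceiling)
  have "real i < t * real m" "t * real m \<le> real (Suc i)" using ri by linarith+
  moreover have "t * real m \<le> real N * real m" using t m by simp
  hence "\<lceil>t * real m\<rceil> \<le> int (N * m)" by (simp add: ceiling_le_iff)
  hence "i < N * m" unfolding i_def using pos by linarith
  ultimately show ?thesis using that m by (simp add: divide_less_eq le_divide_eq)
qed

context mallows_births
begin

lemma prob_Int_Bsigma:
  assumes j: "j1 \<in> {1..n}" "j2 \<in> {1..n}" "j1 \<noteq> j2" and E: "E1 \<in> Bsigma j1" "E2 \<in> Bsigma j2"
  shows "prob (E1 \<inter> E2) = prob E1 * prob E2"
proof -
  define E where "E j = (if j = j1 then E1 else if j = j2 then E2 else space M)" for j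
  have EF: "E j \<in> Bsigma j" if "j \<in> {1..n}" for j
    using E unfolding E_def Bsigma_def by (auto intro: sigma_sets_top)
  have "E1 \<subseteq> space M" "E2 \<subseteq> space M"
    using Bsigma_subset_events[OF j(1)] Bsigma_subset_events[OF j(2)] E sets.sets_into_space by blast+
  hence "space M \<inter> (\<Inter>j\<in>{1..n}. E j) = E1 \<inter> E2"
    using j unfolding E_def by (auto split: if_splits)
  hence "prob (E1 \<inter> E2) = (\<Prod>j\<in>{1..n}. prob (E j))" using prob_INT_Bsigma[OF EF] by simp
  also have "{1..n} = insert j1 (insert j2 ({1..n} - {j1, j2}))" using j by auto
  also have "(\<Prod>j\<in>insert j1 (insert j2 ({1..n} - {j1, j2})). prob (E j))
      = prob E1 * prob E2 * (\<Prod>j\<in>{1..n} - {j1, j2}. prob (E j))"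
    using j by (simp add: E_def)
  also have "(\<Prod>j\<in>{1..n} - {j1, j2}. prob (E j)) = 1"
    by (rule prod.neutral) (auto simp: E_def prob_space)
  finally show ?thesis by simp
qed

lemma prob_change_le_uniform:
  "\<exists>K\<ge>0. \<forall>j\<in>{1..n}. \<forall>a b. 0 \<le> a \<longrightarrow> a \<le> b \<longrightarrow> b \<le> T \<longrightarrow>
     prob {\<omega>\<in>space M. B j a \<omega> \<noteq> B j b \<omega>} \<le> K * (b - a) \<and>
     prob {\<omega>\<in>space M. B j a \<omega> + 2 \<le> B j b \<omega>} \<le> K * (b - a)^2"
proof -
  have "\<forall>j\<in>{1..n}. \<exists>K\<ge>0. \<forall>a b. 0 \<le> a \<longrightarrow> a \<le> b \<longrightarrow> b \<le> T \<longrightarrow>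
     prob {\<omega>\<in>space M. B j a \<omega> \<noteq> B j b \<omega>} \<le> K * (b - a) \<and>
     prob {\<omega>\<in>space M. B j a \<omega> + 2 \<le> B j b \<omega>} \<le> K * (b - a)^2"
    using prate_birth_process.prob_change_le[OF prate_birth_process_B] by blast
  from bchoice[OF this] obtain Kf where Kf: "\<forall>j\<in>{1..n}. Kf j \<ge> 0 \<and> (\<forall>a b. 0 \<le> a \<longrightarrow> a \<le> b \<longrightarrow> b \<le> T \<longrightarrow>
     prob {\<omega>\<in>space M. B j a \<omega> \<noteq> B j b \<omega>} \<le> Kf j * (b - a) \<and>
     prob {\<omega>\<in>space M. B j a \<omega> + 2 \<le> B j b \<omega>} \<le> Kf j * (b - a)^2)" by blast
  define K where "K = (\<Sum>j\<in>{1..n}. Kf j)"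
  have KK: "Kf j \<le> K" if "j \<in> {1..n}" for j
    unfolding K_def by (rule member_le_sum) (use Kf that in auto)
  have "\<forall>j\<in>{1..n}. \<forall>a b. 0 \<le> a \<longrightarrow> a \<le> b \<longrightarrow> b \<le> T \<longrightarrow>
     prob {\<omega>\<in>space M. B j a \<omega> \<noteq> B j b \<omega>} \<le> K * (b - a) \<and>
     prob {\<omega>\<in>space M. B j a \<omega> + 2 \<le> B j b \<omega>} \<le> K * (b - a)^2"
  proof (intro ballI allI impI)
    fix j a b assume j: "j \<in> {1..n}" and ab: "0 \<le> a" "a \<le> b" "b \<le> T"
    have "Kf j * (b - a) \<le> K * (b - a)" "Kf j * (b - a)^2 \<le> K * (b - a)^2"
      using KK[OF j] ab by (auto intro: mult_right_mono)
    thus "prob {\<omega>\<in>space M. B j a \<omega> \<noteq> B j b \<omega>} \<le> K * (b - a) \<and>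
     prob {\<omega>\<in>space M. B j a \<omega> + 2 \<le> B j b \<omega>} \<le> K * (b - a)^2" using Kf j ab by fastforce
  qed
  moreover have "K \<ge> 0" unfolding K_def using Kf by (auto intro: sum_nonneg)
  ultimately show ?thesis by blast
qed

definition grid :: "nat \<Rightarrow> nat \<Rightarrow> real" where
  "grid m i = real i / real m"

definition jump2 :: "nat \<Rightarrow> nat \<Rightarrow> nat \<Rightarrow> 'a set" where
  "jump2 j m i = {\<omega>\<in>space M. B j (grid m i) \<omega> + 2 \<le> B j (grid m (Suc i)) \<omega>}"

definition jump :: "nat \<Rightarrow> nat \<Rightarrow> nat \<Rightarrow> 'a set" where
  "jump j m i = {\<omega>\<in>space M. B j (grid m i) \<omega> \<noteq> B j (grid m (Suc i)) \<omega>}"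

definition multi_jump :: "nat \<Rightarrow> nat \<Rightarrow> 'a set" where
  "multi_jump N m = (\<Union>i<N*m. (\<Union>j\<in>{1..n}. jump2 j m i) \<union> (\<Union>j1\<in>{1..n}. \<Union>j2\<in>{1..n}-{j1}. jump j1 m i \<inter> jump j2 m i))"

lemma jump_events: "j \<in> {1..n} \<Longrightarrow> jump2 j m i \<in> events" "j \<in> {1..n} \<Longrightarrow> jump j m i \<in> events"
  unfolding jump2_def jump_def by (rule events_Collect_B2, simp)+

lemma multi_jump_events: "multi_jump N m \<in> events"
  unfolding multi_jump_def using jump_events by (auto intro!: sets.finite_UN sets.Un sets.Int)

lemma prob_multi_jump_cell_le:
  assumes "\<And>j. j \<in> {1..n} \<Longrightarrow> prob (jump2 j m i) \<le> K * h^2"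
    and "\<And>j. j \<in> {1..n} \<Longrightarrow> prob (jump j m i) \<le> K * h" and "K \<ge> 0" "h \<ge> 0"
  shows "prob ((\<Union>j\<in>{1..n}. jump2 j m i) \<union> (\<Union>j1\<in>{1..n}. \<Union>j2\<in>{1..n}-{j1}. jump j1 m i \<inter> jump j2 m i))
    \<le> real n * (K * h^2) + real n * real n * (K * h * (K * h))"
proof -
  have pair: "prob (jump j1 m i \<inter> jump j2 m i) \<le> K * h * (K * h)"
    if "j1 \<in> {1..n}" "j2 \<in> {1..n}-{j1}" for j1 j2
  proof -
    have "prob (jump j1 m i \<inter> jump j2 m i) = prob (jump j1 m i) * prob (jump j2 m i)"
      unfolding jump_def by (rule prob_Int_Bsigma[of j1 j2]) (use that in \<open>auto intro!: Collect_B2_in_Bsigma simp: grid_def\<close>)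
    also have "\<dots> \<le> K * h * (K * h)"
      using assms(2)[of j1] assms(2)[of j2] that assms(3,4) by (intro mult_mono) auto
    finally show ?thesis .
  qed
  have "prob ((\<Union>j\<in>{1..n}. jump2 j m i) \<union> (\<Union>j1\<in>{1..n}. \<Union>j2\<in>{1..n}-{j1}. jump j1 m i \<inter> jump j2 m i))
      \<le> prob (\<Union>j\<in>{1..n}. jump2 j m i) + prob (\<Union>j1\<in>{1..n}. \<Union>j2\<in>{1..n}-{j1}. jump j1 m i \<inter> jump j2 m i)"
    by (rule measure_Un_le) (use jump_events in \<open>auto intro!: sets.finite_UN sets.Int\<close>)
  also have "prob (\<Union>j\<in>{1..n}. jump2 j m i) \<le> (\<Sum>j\<in>{1..n}. prob (jump2 j m i))"
    by (rule measure_UNION_le) (use jump_events in auto)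
  also have "\<dots> \<le> (\<Sum>j\<in>{1..n}. K * h^2)" using assms(1) by (intro sum_mono) auto
  also have "prob (\<Union>j1\<in>{1..n}. \<Union>j2\<in>{1..n}-{j1}. jump j1 m i \<inter> jump j2 m i)
      \<le> (\<Sum>j1\<in>{1..n}. prob (\<Union>j2\<in>{1..n}-{j1}. jump j1 m i \<inter> jump j2 m i))"
    by (rule measure_UNION_le) (use jump_events in \<open>auto intro!: sets.finite_UN sets.Int\<close>)
  also have "\<dots> \<le> (\<Sum>j1\<in>{1..n}. \<Sum>j2\<in>{1..n}-{j1}. prob (jump j1 m i \<inter> jump j2 m i))"
    by (intro sum_mono measure_UNION_le) (use jump_events in \<open>auto intro!: sets.Int\<close>)
  also have "\<dots> \<le> (\<Sum>j1\<in>{1..n}. \<Sum>j2\<in>{1..n}-{j1}. K * h * (K * h))"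
    using pair by (intro sum_mono) auto
  also have "\<dots> \<le> (\<Sum>j1\<in>{1..n}. \<Sum>j2\<in>{1..n}. K * h * (K * h))"
    using assms(3,4) by (intro sum_mono sum_mono2) auto
  finally show ?thesis by simp
qed

lemma prob_multi_jump_le: "\<exists>C\<ge>0. \<forall>m\<ge>1. prob (multi_jump N m) \<le> C / real m"
proof -
  obtain K where K: "K \<ge> 0" "\<forall>j\<in>{1..n}. \<forall>a b. 0 \<le> a \<longrightarrow> a \<le> b \<longrightarrow> b \<le> real N \<longrightarrow>
     prob {\<omega>\<in>space M. B j a \<omega> \<noteq> B j b \<omega>} \<le> K * (b - a) \<and>
     prob {\<omega>\<in>space M. B j a \<omega> + 2 \<le> B j b \<omega>} \<le> K * (b - a)^2"
    using prob_change_le_uniform[of "real N"] by blast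
  define C where "C = real N * (real n * K + real n * real n * (K * K))"
  have "prob (multi_jump N m) \<le> C / real m" if m: "m \<ge> 1" for m
  proof -
    define h where "h = 1 / real m"
    have grid: "0 \<le> grid m i" "grid m i \<le> grid m (Suc i)" "grid m (Suc i) - grid m i = h" for i
      unfolding grid_def h_def using m by (auto simp: divide_right_mono diff_divide_distrib[symmetric])
    have "grid m (Suc i) \<le> real N" if "i < N * m" for i
    proof -
      have "real (Suc i) \<le> real N * real m" using that by (metis Suc_leI of_nat_le_iff of_nat_mult)
      thus ?thesis unfolding grid_def using m by (simp add: divide_le_eq)
    qed
    hence cell: "prob (jump2 j m i) \<le> K * h^2 \<and> prob (jump j m i) \<le> K * h"
      if "j \<in> {1..n}" "i < N * m" for j i
      using K(2)[rule_format, OF that(1) grid(1)[of i] grid(2)[of i]] that(2)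
      unfolding jump2_def jump_def grid(3) by auto
    have "prob (multi_jump N m) \<le> (\<Sum>i<N*m. prob ((\<Union>j\<in>{1..n}. jump2 j m i) \<union>
        (\<Union>j1\<in>{1..n}. \<Union>j2\<in>{1..n}-{j1}. jump j1 m i \<inter> jump j2 m i)))"
      unfolding multi_jump_def
      by (rule measure_UNION_le) (use jump_events in \<open>auto intro!: sets.finite_UN sets.Un sets.Int\<close>)
    also have "\<dots> \<le> (\<Sum>i<N*m. real n * (K * h^2) + real n * real n * (K * h * (K * h)))"
      using cell K(1) by (intro sum_mono prob_multi_jump_cell_le) (auto simp: h_def)
    also have "\<dots> = C / real m" unfolding C_def h_def using m by (simp add: field_simps power2_eq_square)
    finally show ?thesis .
  qed
  moreover have "C \<ge> 0" unfolding C_def using K by simp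
  ultimately show ?thesis by blast
qed

lemma multi_jump_null: "(\<Inter>m. multi_jump N (Suc m)) \<in> null_sets M"
proof -
  obtain C where C: "\<forall>m\<ge>1. prob (multi_jump N m) \<le> C / real m" using prob_multi_jump_le by blast
  have le: "prob (\<Inter>m. multi_jump N (Suc m)) \<le> C / real (Suc k)" for k
  proof -
    have "prob (\<Inter>m. multi_jump N (Suc m)) \<le> prob (multi_jump N (Suc k))"
      by (rule finite_measure_mono) (auto intro: multi_jump_events)
    also have "\<dots> \<le> C / real (Suc k)" using C[rule_format, of "Suc k"] by simp
    finally show ?thesis .
  qed
  have "(\<lambda>k. C / real (Suc k)) \<longlonglongrightarrow> 0"
    using LIMSEQ_Suc[OF lim_const_over_n[of C]] by simp
  hence "prob (\<Inter>m. multi_jump N (Suc m)) \<le> 0"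
    using le by (intro tendsto_le[OF trivial_limit_sequentially _ tendsto_const]) auto
  hence "prob (\<Inter>m. multi_jump N (Suc m)) = 0" by (simp add: order_antisym)
  thus ?thesis using multi_jump_events by (simp add: null_sets_def emeasure_eq_measure)
qed

text \<open>A jump of total size at least 2 at time \<open>t \<le> N\<close> is seen in every grid: monotonicity
  squeezes it into the cell containing \<open>t\<close>.\<close>
lemma multi_jump_if_jump_ge_2:
  assumes \<omega>: "regular_sample \<omega>" "\<omega> \<in> space M" and t: "t > 0" "t \<le> real N" and m: "m \<ge> 1"
    and big: "(\<Sum>j\<in>{1..n}. left_lim (\<lambda>u. B j u \<omega>) t) + 2 \<le> (\<Sum>j\<in>{1..n}. B j t \<omega>)"
  shows "\<omega> \<in> multi_jump N m"
proof -
  obtain i where i: "i < N * m" "grid m i < t" "t \<le> grid m (Suc i)"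
    using grid_cell_exists[OF t m] unfolding grid_def by blast
  define x where "x j = B j (grid m (Suc i)) \<omega>" for j
  define y where "y j = B j (grid m i) \<omega>" for j
  have Bj: "cadlag (\<lambda>u. B j u \<omega>)" "mono_on {0..} (\<lambda>u. B j u \<omega>)" if "j \<in> {1..n}" for j
    using \<omega>(1) that unfolding regular_sample_def by blast+
  have "0 \<le> grid m i" unfolding grid_def by simp
  have xt: "B j t \<omega> \<le> x j" if "j \<in> {1..n}" for j
    unfolding x_def using mono_onD[OF Bj(2)[OF that]] t i by auto
  have yl: "y j \<le> left_lim (\<lambda>u. B j u \<omega>) t" if j: "j \<in> {1..n}" for j
  proof -
    obtain u where u: "0 \<le> u" "u < t" "\<forall>v\<in>{u..<t}. B j v \<omega> = left_lim (\<lambda>u. B j u \<omega>) t"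
      using cadlag_left_lim_attained[OF Bj(1)[OF j] t(1)] by blast
    have "y j \<le> B j (max u (grid m i)) \<omega>"
      unfolding y_def using mono_onD[OF Bj(2)[OF j]] \<open>0 \<le> grid m i\<close> by auto
    also have "\<dots> = left_lim (\<lambda>u. B j u \<omega>) t" using u i by auto
    finally show ?thesis .
  qed
  have "y j \<le> x j" if "j \<in> {1..n}" for j
    using mono_onD[OF Bj(2)[OF that], of "grid m i" "grid m (Suc i)"] \<open>0 \<le> grid m i\<close> i
    unfolding x_def y_def by auto
  hence "\<forall>j\<in>{1..n}. y j \<le> x j" by blast
  moreover have "(\<Sum>j\<in>{1..n}. y j) + 2 \<le> (\<Sum>j\<in>{1..n}. x j)"
    using sum_mono[of "{1..n}" y, OF yl] sum_mono[of "{1..n}" _ x, OF xt] big by linarith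
  ultimately have "(\<exists>j\<in>{1..n}. y j + 2 \<le> x j) \<or> (\<exists>j1\<in>{1..n}. \<exists>j2\<in>{1..n}. j1 \<noteq> j2 \<and> y j1 \<noteq> x j1 \<and> y j2 \<noteq> x j2)"
    by (intro sum_increment_ge_2_cases) auto
  thus ?thesis
    unfolding multi_jump_def jump2_def jump_def x_def y_def using \<omega>(2) i(1) by blast
qed

lemma left_lim_B_le:
  assumes "regular_sample \<omega>" "j \<in> {1..n}" "t > 0"
  shows "left_lim (\<lambda>u. B j u \<omega>) t \<le> j - 1"
proof -
  have Bj: "cadlag (\<lambda>u. B j u \<omega>)" "\<forall>u\<ge>0. B j u \<omega> \<le> j - 1"
    using assms unfolding regular_sample_def by blast+
  obtain u where u: "0 \<le> u" "u < t" "\<forall>v\<in>{u..<t}. B j v \<omega> = left_lim (\<lambda>u. B j u \<omega>) t"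
    using cadlag_left_lim_attained[OF Bj(1) assms(3)] by blast
  hence "left_lim (\<lambda>u. B j u \<omega>) t = B j u \<omega>" by simp
  thus ?thesis using Bj(2) u(1) by simp
qed

lemma AE_Inv_MB_jump_le_1: "AE \<omega> in M. \<forall>t>0. Inv n (MB t \<omega>) \<le> Inv n (left_lim (\<lambda>u. MB u \<omega>) t) + 1"
proof -
  have "AE \<omega> in M. \<forall>N. \<omega> \<notin> (\<Inter>m. multi_jump N (Suc m))"
    unfolding AE_all_countable by (intro allI AE_not_in multi_jump_null)
  with AE_regular_sample AE_space show ?thesis
  proof eventually_elim
    case (elim \<omega>)
    show ?case
    proof (intro allI impI)
      fix t :: real assume t: "t > 0"
      define l where "l j = left_lim (\<lambda>u. B j u \<omega>) t" for j
      have "Inv n (MB t \<omega>) = (\<Sum>j\<in>{1..n}. B j t \<omega>)"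
        unfolding Inv_def using invj_MB[OF elim(1), of t] t by (intro sum.cong) auto
      moreover have "Inv n (left_lim (\<lambda>u. MB u \<omega>) t) = (\<Sum>j\<in>{1..n}. l j)"
        unfolding Inv_def left_lim_MB[OF elim(1) t] l_def
        using invj_Phi left_lim_B_le[OF elim(1) _ t] by (intro sum.cong) auto
      moreover have "\<not> (\<Sum>j\<in>{1..n}. l j) + 2 \<le> (\<Sum>j\<in>{1..n}. B j t \<omega>)"
      proof
        assume big: "(\<Sum>j\<in>{1..n}. l j) + 2 \<le> (\<Sum>j\<in>{1..n}. B j t \<omega>)"
        have "t \<le> real (nat \<lceil>t\<rceil>)" by linarith
        hence "\<omega> \<in> multi_jump (nat \<lceil>t\<rceil>) (Suc m)" for m
          using multi_jump_if_jump_ge_2[OF elim(1,2) t _ _ big[unfolded l_def]] by simp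
        thus False using elim(3) by blast
      qed
      ultimately show "Inv n (MB t \<omega>) \<le> Inv n (left_lim (\<lambda>u. MB u \<omega>) t) + 1" by linarith
    qed
  qed
qed

end

section \<open>The Markov property\<close>

context mallows_births
begin

definition past_cylinders :: "real \<Rightarrow> 'a set set" where
  "past_cylinders s = {space M \<inter> (\<Inter>j\<in>{1..n}. A j) | A. \<forall>j\<in>{1..n}. A j \<in> nat_filt M (B j) s}"

definition B_at :: "real \<Rightarrow> (nat \<Rightarrow> nat) \<Rightarrow> 'a set" where
  "B_at s a = {\<omega>\<in>space M. \<forall>j\<in>{1..n}. B j s \<omega> = a j}"

definition B_at2 :: "real \<Rightarrow> real \<Rightarrow> (nat \<Rightarrow> nat) \<Rightarrow> (nat \<Rightarrow> nat) \<Rightarrow> 'a set" where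
  "B_at2 s t a b = {\<omega>\<in>space M. \<forall>j\<in>{1..n}. B j s \<omega> = a j \<and> B j t \<omega> = b j}"

definition vec_trans :: "real \<Rightarrow> real \<Rightarrow> (nat \<Rightarrow> nat) \<Rightarrow> (nat \<Rightarrow> nat) \<Rightarrow> real" where
  "vec_trans s t a b = (\<Prod>j\<in>{1..n}. birth_trans (prate j) s t (a j) (b j))"

lemma B_at_events: "B_at s a \<in> events"
  unfolding B_at_def by (rule sets.sets_Collect_finite_All) (auto intro: events_Collect_B)

lemma B_at2_events: "B_at2 s t a b \<in> events"
  unfolding B_at2_def by (rule sets.sets_Collect_finite_All) (auto intro: events_Collect_B2)

lemma past_cylinders_events:
  assumes "s \<ge> 0"
  shows "past_cylinders s \<subseteq> events"
proof
  fix X assume "X \<in> past_cylinders s"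
  then obtain A where X: "X = space M \<inter> (\<Inter>j\<in>{1..n}. A j)" "\<forall>j\<in>{1..n}. A j \<in> nat_filt M (B j) s"
    unfolding past_cylinders_def by blast
  have "A j \<in> events" if "j \<in> {1..n}" for j
    using X(2) that nat_filt_subset_Bsigma[OF assms] Bsigma_subset_events by blast
  hence "{\<omega>\<in>space M. \<forall>j\<in>{1..n}. \<omega> \<in> A j} \<in> events"
    by (intro sets.sets_Collect_finite_All) (auto intro: sets.Int)
  moreover have "X = {\<omega>\<in>space M. \<forall>j\<in>{1..n}. \<omega> \<in> A j}" using X(1) by auto
  ultimately show "X \<in> events" by simp
qed

lemma Int_stable_past_cylinders: "Int_stable (past_cylinders s)"
proof (rule Int_stableI)
  fix X Y assume "X \<in> past_cylinders s" "Y \<in> past_cylinders s"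
  then obtain A A' where X: "X = space M \<inter> (\<Inter>j\<in>{1..n}. A j)" "\<forall>j\<in>{1..n}. A j \<in> nat_filt M (B j) s"
    and Y: "Y = space M \<inter> (\<Inter>j\<in>{1..n}. A' j)" "\<forall>j\<in>{1..n}. A' j \<in> nat_filt M (B j) s"
    unfolding past_cylinders_def by blast
  have "X \<inter> Y = space M \<inter> (\<Inter>j\<in>{1..n}. A j \<inter> A' j)" using X Y by auto
  moreover have "A j \<inter> A' j \<in> nat_filt M (B j) s" if "j \<in> {1..n}" for j
  proof -
    interpret F: sigma_algebra "space M" "nat_filt M (B j) s"
      unfolding nat_filt_def by (rule sigma_algebra_sigma_sets) auto
    show ?thesis using X(2) Y(2) that by auto
  qed
  ultimately show "X \<inter> Y \<in> past_cylinders s" unfolding past_cylinders_def by blast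
qed

lemma space_in_past_cylinders: "space M \<in> past_cylinders s"
proof -
  have "space M = space M \<inter> (\<Inter>j\<in>{1..n}. space M)" by auto
  moreover have "space M \<in> nat_filt M (B j) s" for j unfolding nat_filt_def by (rule sigma_sets_top)
  ultimately show ?thesis unfolding past_cylinders_def by blast
qed

lemma past_cylinders_Pow: "s \<ge> 0 \<Longrightarrow> past_cylinders s \<subseteq> Pow (space M)"
  using past_cylinders_events sets.sets_into_space by blast

lemma nat_filt_MB_subset:
  assumes "s \<ge> 0"
  shows "nat_filt M MB s \<subseteq> sigma_sets (space M) (past_cylinders s)"
  unfolding nat_filt_def
proof (rule sigma_algebra.sigma_sets_subset[OF sigma_algebra_sigma_sets[OF past_cylinders_Pow[OF assms]]], safe)
  fix r C assume r: "0 \<le> r" "r \<le> s"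
  define Cs where "Cs = PiE {1..n} (\<lambda>_. UNIV :: nat set) \<inter> {c. Phi n c \<in> C}"
  define Z where "Z c = space M \<inter> (\<Inter>j\<in>{1..n}. {\<omega>\<in>space M. B j r \<omega> = c j})" for c
  have "MB r -` C \<inter> space M = \<Union> (Z ` Cs)"
  proof (intro equalityI subsetI)
    fix \<omega> assume \<omega>: "\<omega> \<in> MB r -` C \<inter> space M"
    define c where "c = restrict (\<lambda>j. B j r \<omega>) {1..n}"
    have "Phi n c = MB r \<omega>" unfolding MB_def c_def by (rule Phi_cong) simp
    hence "c \<in> Cs" using \<omega> unfolding Cs_def c_def by auto
    moreover have "\<omega> \<in> Z c" using \<omega> unfolding Z_def c_def by auto
    ultimately show "\<omega> \<in> \<Union> (Z ` Cs)" by blast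
  next
    fix \<omega> assume "\<omega> \<in> \<Union> (Z ` Cs)"
    then obtain c where c: "c \<in> Cs" "\<omega> \<in> Z c" by blast
    have "MB r \<omega> = Phi n c" unfolding MB_def by (rule Phi_cong) (use c in \<open>auto simp: Z_def\<close>)
    thus "\<omega> \<in> MB r -` C \<inter> space M" using c unfolding Cs_def Z_def by auto
  qed
  moreover have "countable (Z ` Cs)"
  proof -
    have "countable (PiE {1..n} (\<lambda>_. UNIV :: nat set))" by (rule countable_PiE) auto
    hence "countable Cs" unfolding Cs_def by (rule countable_subset[rotated]) auto
    thus ?thesis by simp
  qed
  moreover have "Z c \<in> past_cylinders s" for c
  proof -
    have "{\<omega>\<in>space M. B j r \<omega> = c j} \<in> nat_filt M (B j) s" for j
    proof -
      have "{\<omega>\<in>space M. B j r \<omega> = c j} = B j r -` {c j} \<inter> space M" by auto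
      thus ?thesis unfolding nat_filt_def using r by (auto intro!: sigma_sets.Basic)
    qed
    thus ?thesis unfolding past_cylinders_def Z_def by blast
  qed
  ultimately show "MB r -` C \<inter> space M \<in> sigma_sets (space M) (past_cylinders s)"
    by (auto intro!: sigma_sets_UNION intro: sigma_sets.Basic)
qed

context
  fixes s t :: real
  assumes st: "0 \<le> s" "s \<le> t"
begin

lemma past_events: "X \<in> sigma_sets (space M) (past_cylinders s) \<Longrightarrow> X \<in> events"
  using sets.sigma_sets_subset[OF past_cylinders_events[OF st(1)]] by blast

text \<open>By independence, the product of the Markov properties of the \<open>B\<^sub>j\<close> is the Markov property
  of the vector \<open>B\<close> on past cylinders.\<close>
lemma prob_past_cylinder_B_at2:
  assumes "X \<in> past_cylinders s"
  shows "prob (X \<inter> B_at2 s t a b) = prob (X \<inter> B_at s a) * vec_trans s t a b"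
proof -
  obtain A where X: "X = space M \<inter> (\<Inter>j\<in>{1..n}. A j)" "\<forall>j\<in>{1..n}. A j \<in> nat_filt M (B j) s"
    using assms unfolding past_cylinders_def by blast
  define E1 where "E1 j = A j \<inter> {\<omega>\<in>space M. B j s \<omega> = a j \<and> B j t \<omega> = b j}" for j
  define E0 where "E0 j = A j \<inter> {\<omega>\<in>space M. B j s \<omega> = a j}" for j
  have E: "E1 j \<in> Bsigma j" "E0 j \<in> Bsigma j" if "j \<in> {1..n}" for j
  proof -
    interpret F: sigma_algebra "space M" "Bsigma j" by (rule sigma_algebra_Bsigma)
    have "A j \<in> Bsigma j" using X(2) that nat_filt_subset_Bsigma[OF st(1), of j] by blast
    thus "E1 j \<in> Bsigma j" "E0 j \<in> Bsigma j" unfolding E1_def E0_def using st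
      by (auto intro!: F.Int Collect_B2_in_Bsigma Collect_B_in_Bsigma)
  qed
  have "X \<inter> B_at2 s t a b = space M \<inter> (\<Inter>j\<in>{1..n}. E1 j)" unfolding X E1_def B_at2_def by auto
  hence "prob (X \<inter> B_at2 s t a b) = (\<Prod>j\<in>{1..n}. prob (E1 j))" using prob_INT_Bsigma E(1) by simp
  also have "\<dots> = (\<Prod>j\<in>{1..n}. prob (E0 j) * birth_trans (prate j) s t (a j) (b j))"
  proof (rule prod.cong[OF refl])
    fix j assume j: "j \<in> {1..n}"
    have "A j \<in> nat_filt M (B j) s" "birth_process M (B j) (prate j)" using X(2) births j by blast+
    thus "prob (E1 j) = prob (E0 j) * birth_trans (prate j) s t (a j) (b j)"
      unfolding E1_def E0_def birth_process_def using st by blast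
  qed
  also have "\<dots> = (\<Prod>j\<in>{1..n}. prob (E0 j)) * vec_trans s t a b"
    unfolding vec_trans_def by (rule prod.distrib)
  also have "X \<inter> B_at s a = space M \<inter> (\<Inter>j\<in>{1..n}. E0 j)" unfolding X E0_def B_at_def by auto
  hence "(\<Prod>j\<in>{1..n}. prob (E0 j)) = prob (X \<inter> B_at s a)" using prob_INT_Bsigma E(2) by simp
  finally show ?thesis .
qed

lemma prob_past_B_at2:
  assumes "X \<in> sigma_sets (space M) (past_cylinders s)"
  shows "prob (X \<inter> B_at2 s t a b) = prob (X \<inter> B_at s a) * vec_trans s t a b"
  using Int_stable_past_cylinders past_cylinders_Pow[OF st(1)] assms
proof (induction rule: sigma_sets_induct_disjoint)
  case (basic A) thus ?case by (rule prob_past_cylinder_B_at2)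
next
  case (compl A)
  have A: "A \<in> events" using compl(1) by (rule past_events)
  have "prob ((space M - A) \<inter> B_at2 s t a b) = prob (B_at2 s t a b) - prob (A \<inter> B_at2 s t a b)"
    using A B_at2_events by (subst finite_measure_Diff[symmetric]) (auto intro: arg_cong[where f=prob] simp: B_at2_def)
  moreover have "prob ((space M - A) \<inter> B_at s a) = prob (B_at s a) - prob (A \<inter> B_at s a)"
    using A B_at_events by (subst finite_measure_Diff[symmetric]) (auto intro: arg_cong[where f=prob] simp: B_at_def)
  moreover have "prob (B_at2 s t a b) = prob (B_at s a) * vec_trans s t a b"
    using prob_past_cylinder_B_at2[OF space_in_past_cylinders, of a b] B_at2_events B_at_events
      sets.sets_into_space by (simp add: Int_absorb1)
  ultimately show ?case using compl(2) by (simp add: right_diff_distrib mult.commute)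
next
  case (union A)
  have A: "A i \<in> events" for i using union(2) by (intro past_events) blast
  have "(\<lambda>i. prob (A i \<inter> B_at2 s t a b)) sums prob (\<Union>i. A i \<inter> B_at2 s t a b)"
    using union(1) A B_at2_events by (intro finite_measure_UNION) (auto simp: disjoint_family_on_def)
  moreover have "(\<lambda>i. prob (A i \<inter> B_at s a) * vec_trans s t a b) sums (prob (\<Union>i. A i \<inter> B_at s a) * vec_trans s t a b)"
    using union(1) A B_at_events
    by (intro sums_mult2 finite_measure_UNION) (auto simp: disjoint_family_on_def)
  ultimately have "prob (\<Union>i. A i \<inter> B_at2 s t a b) = prob (\<Union>i. A i \<inter> B_at s a) * vec_trans s t a b"
    using union(3) by (simp add: sums_unique2)
  thus ?case by (simp add: Int_UN_distrib2)
qed simp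

lemma prob_past_MB_eq:
  assumes X: "X \<in> sigma_sets (space M) (past_cylinders s)" and x: "x \<in> Sn n"
  shows "prob (X \<inter> {\<omega>\<in>space M. MB s \<omega> = x}) = prob (X \<inter> B_at s (\<lambda>j. invj j x))"
proof (rule finite_measure_eq_AE)
  from AE_regular_sample show "AE \<omega> in M. (\<omega> \<in> X \<inter> {\<omega>\<in>space M. MB s \<omega> = x}) = (\<omega> \<in> X \<inter> B_at s (\<lambda>j. invj j x))"
  proof eventually_elim
    case (elim \<omega>)
    have "MB s \<omega> = x \<longleftrightarrow> (\<forall>j\<in>{1..n}. B j s \<omega> = invj j x)"
      using invj_MB[OF elim st(1)] Phi_eqI[OF x, of "\<lambda>j. B j s \<omega>"] unfolding MB_def by auto
    thus ?case unfolding B_at_def by auto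
  qed
qed (use past_events[OF X] events_Collect_MB B_at_events in auto)

definition codes_of :: "(nat \<Rightarrow> nat) \<Rightarrow> (nat \<Rightarrow> nat) set" where
  "codes_of y = {b \<in> PiE {1..n} (\<lambda>j. {..<j}). Phi n b = y}"

lemma AE_MB_at2_iff:
  assumes x: "x \<in> Sn n"
  shows "AE \<omega> in M. (MB s \<omega> = x \<and> MB t \<omega> = y) \<longleftrightarrow> (\<exists>b\<in>codes_of y. \<omega> \<in> B_at2 s t (\<lambda>j. invj j x) b)"
  using AE_regular_sample AE_space
proof eventually_elim
  case (elim \<omega>)
  have s_iff: "MB s \<omega> = x \<longleftrightarrow> (\<forall>j\<in>{1..n}. B j s \<omega> = invj j x)"
    using invj_MB[OF elim(1) st(1)] Phi_eqI[OF x, of "\<lambda>j. B j s \<omega>"] unfolding MB_def by auto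
  have "B j t \<omega> < j" if "j \<in> {1..n}" for j
  proof -
    have "B j t \<omega> \<le> j - 1" using elim(1) that st unfolding regular_sample_def by auto
    thus ?thesis using that by auto
  qed
  hence code: "restrict (\<lambda>j. B j t \<omega>) {1..n} \<in> codes_of (MB t \<omega>)"
    unfolding codes_of_def MB_def by (auto intro: Phi_cong)
  have Phi_b: "Phi n b = MB t \<omega>" if "\<forall>j\<in>{1..n}. B j t \<omega> = b j" for b
    unfolding MB_def by (rule Phi_cong) (use that in auto)
  show ?case
  proof (intro iffI)
    assume "MB s \<omega> = x \<and> MB t \<omega> = y"
    thus "\<exists>b\<in>codes_of y. \<omega> \<in> B_at2 s t (\<lambda>j. invj j x) b"
      using code s_iff elim(2) unfolding B_at2_def by (intro bexI) auto
  next
    assume "\<exists>b\<in>codes_of y. \<omega> \<in> B_at2 s t (\<lambda>j. invj j x) b"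
    then obtain b where "b \<in> codes_of y" "\<omega> \<in> B_at2 s t (\<lambda>j. invj j x) b" by blast
    thus "MB s \<omega> = x \<and> MB t \<omega> = y"
      using Phi_b[of b] s_iff unfolding B_at2_def codes_of_def by auto
  qed
qed

lemma prob_past_MB_at2:
  assumes X: "X \<in> sigma_sets (space M) (past_cylinders s)" and x: "x \<in> Sn n"
  shows "prob (X \<inter> {\<omega>\<in>space M. MB s \<omega> = x \<and> MB t \<omega> = y})
       = prob (X \<inter> B_at s (\<lambda>j. invj j x)) * (\<Sum>b\<in>codes_of y. vec_trans s t (\<lambda>j. invj j x) b)"
proof -
  define a where "a = (\<lambda>j. invj j x)"
  have X_ev: "X \<in> events" by (rule past_events[OF X])
  have fin: "finite (codes_of y)"
  proof (rule finite_subset)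
    show "codes_of y \<subseteq> PiE {1..n} (\<lambda>j. {..<j})" unfolding codes_of_def by blast
    show "finite (PiE {1..n} (\<lambda>j. {..<j::nat}))" by (rule finite_PiE) auto
  qed
  have "prob (X \<inter> {\<omega>\<in>space M. MB s \<omega> = x \<and> MB t \<omega> = y}) = prob (\<Union>b\<in>codes_of y. X \<inter> B_at2 s t a b)"
  proof (rule finite_measure_eq_AE)
    show "AE \<omega> in M. (\<omega> \<in> X \<inter> {\<omega>\<in>space M. MB s \<omega> = x \<and> MB t \<omega> = y}) = (\<omega> \<in> (\<Union>b\<in>codes_of y. X \<inter> B_at2 s t a b))"
      using AE_MB_at2_iff[OF x, of y] AE_space unfolding a_def by eventually_elim blast
    have "{\<omega>\<in>space M. MB s \<omega> = x \<and> MB t \<omega> = y} = {\<omega>\<in>space M. MB s \<omega> = x} \<inter> {\<omega>\<in>space M. MB t \<omega> = y}" by auto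
    thus "X \<inter> {\<omega>\<in>space M. MB s \<omega> = x \<and> MB t \<omega> = y} \<in> events" using X_ev events_Collect_MB by auto
  qed (use fin X_ev B_at2_events in \<open>auto intro!: sets.Int sets.finite_UN\<close>)
  also have "\<dots> = (\<Sum>b\<in>codes_of y. prob (X \<inter> B_at2 s t a b))"
  proof (rule measure_finite_Union[OF fin])
    show "(\<lambda>b. X \<inter> B_at2 s t a b) ` codes_of y \<subseteq> events" using X_ev B_at2_events by auto
    show "disjoint_family_on (\<lambda>b. X \<inter> B_at2 s t a b) (codes_of y)"
      unfolding disjoint_family_on_def
    proof (intro ballI impI)
      fix b b' assume bb: "b \<in> codes_of y" "b' \<in> codes_of y" "b \<noteq> b'"
      have "b \<in> PiE {1..n} (\<lambda>j. {..<j})" "b' \<in> PiE {1..n} (\<lambda>j. {..<j})"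
        using bb(1,2) unfolding codes_of_def by blast+
      then obtain j where "j \<in> {1..n}" "b j \<noteq> b' j" using PiE_ext bb(3) by blast
      thus "X \<inter> B_at2 s t a b \<inter> (X \<inter> B_at2 s t a b') = {}" unfolding B_at2_def by auto
    qed
    show "emeasure M (X \<inter> B_at2 s t a b) \<noteq> \<infinity>" for b by (simp add: emeasure_eq_measure)
  qed
  also have "\<dots> = (\<Sum>b\<in>codes_of y. prob (X \<inter> B_at s a) * vec_trans s t a b)"
    by (rule sum.cong[OF refl]) (rule prob_past_B_at2[OF X])
  also have "\<dots> = prob (X \<inter> B_at s a) * (\<Sum>b\<in>codes_of y. vec_trans s t a b)"
    by (simp add: sum_distrib_left)
  finally show ?thesis unfolding a_def .
qed

lemma MB_markov_eq:
  assumes A: "A \<in> nat_filt M MB s"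
  shows "prob (A \<inter> {\<omega>\<in>space M. MB s \<omega> = x \<and> MB t \<omega> = y}) * prob {\<omega>\<in>space M. MB s \<omega> = x}
       = prob (A \<inter> {\<omega>\<in>space M. MB s \<omega> = x}) * prob {\<omega>\<in>space M. MB s \<omega> = x \<and> MB t \<omega> = y}"
proof (cases "x \<in> Sn n")
  case False
  have "AE \<omega> in M. \<omega> \<notin> {\<omega>\<in>space M. MB s \<omega> = x}"
    using AE_regular_sample by eventually_elim (use MB_in_Sn[OF _ st(1)] False in auto)
  hence "prob {\<omega>\<in>space M. MB s \<omega> = x} = 0"
    using events_Collect_MB by (simp add: AE_iff_measurable[OF _ refl] emeasure_eq_measure)
  moreover have "prob {\<omega>\<in>space M. MB s \<omega> = x \<and> MB t \<omega> = y} \<le> prob {\<omega>\<in>space M. MB s \<omega> = x}"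
    by (rule finite_measure_mono) (auto intro: events_Collect_MB)
  ultimately show ?thesis using measure_nonneg[of M "{\<omega>\<in>space M. MB s \<omega> = x \<and> MB t \<omega> = y}"] by simp
next
  case True
  have A': "A \<in> sigma_sets (space M) (past_cylinders s)" using A nat_filt_MB_subset[OF st(1)] by blast
  have S: "space M \<in> sigma_sets (space M) (past_cylinders s)" by (rule sigma_sets_top)
  show ?thesis
    using prob_past_MB_at2[OF A' True] prob_past_MB_at2[OF S True, of y]
      prob_past_MB_eq[OF A' True] prob_past_MB_eq[OF S True]
    by (simp add: Int_absorb1)
qed

end

lemma markov_process_MB: "markov_process M MB"
  unfolding markov_process_def using measurable_MB MB_markov_eq by blast

end

theorem mainTheorem7:
  fixes M :: "'a measure" and n :: nat and B :: "nat \<Rightarrow> real \<Rightarrow> 'a \<Rightarrow> nat"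
  assumes "prob_space M"
    and "\<forall>j\<in>{1..n}. birth_process M (B j) (prate j)"
    and "prob_space.indep_vars M (\<lambda>_. Pi\<^sub>M {0..} (\<lambda>_. count_space UNIV))
           (\<lambda>j \<omega>. restrict (\<lambda>t. B j t \<omega>) {0..}) {1..n}"
  shows "regular_mallows_process M n (\<lambda>t \<omega>. Phi n (\<lambda>j. B j t \<omega>))
         \<and> markov_process M (\<lambda>t \<omega>. Phi n (\<lambda>j. B j t \<omega>))"
proof -
  interpret mallows_births M n B
    using assms unfolding mallows_births_def mallows_births_axioms_def by auto
  have MB: "(\<lambda>t \<omega>. Phi n (\<lambda>j. B j t \<omega>)) = MB" by (simp add: MB_def[abs_def])
  show ?thesis unfolding MB regular_mallows_process_def
    using mallows_process_MB AE_mono_invj_MB AE_Inv_MB_jump_le_1 indep_vars_invj_MB markov_process_MB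
    by blast
qed

end
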